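(* Let $1\le n<L$ and all rates $p_k,q_k>0$. For $1\le i\le n$, the total horizontal stationary current of the $\bullet$ in row $i$ is $$J_\bullet(i)=(p_1\cdots p_n-q_1\cdots q_n)\,\frac{Z_{L-1,n}}{Z_{L,n}}.$$
   Context: Particle labels/rows are taken modulo $n$, positions/columns modulo $L$. $\Omega_{L,n}$ is the set of words $w_1\cdots w_L$ on the ring $\mathbb{Z}/L\mathbb{Z}$ over the alphabet $\{\bullet_1,\dots,\bullet_n,\Box_1,\dots,\Box_n\}$ in which each $\bullet_k$ occurs exactly once, the $\bullet_1,\dots,\bullet_n$ appear in this cyclic order, and the remaining $L-n$ letters are arbitrary $\Box_i$'s. Transitions (displayed segments are consecutive positions, rest unchanged, $C$ a possibly empty word in the $\Box$-letters): (T1) $\bullet_k\Box_i \to \Box_i\bullet_k$ at rate $p_k$, if $i\neq k$; (T2) $\bullet_{k-1}\,C\,\bullet_k\Box_k \to \bullet_{k-1}\Box_{k-1}\,C\,\bullet_k$ at rate $p_k$; (T3) $\Box_i\bullet_k \to \bullet_k\Box_i$ at rate $q_k$, if $i\neq k$; (T4) $\Box_k\bullet_k\,C\,\bullet_{k+1} \to \bullet_k\,C\,\Box_{k+1}\bullet_{k+1}$ at rate $q_k$. $\mathcal{A}_{L,n}$ is the set of arrays with $n$ rows and $L$ columns, entries in $\{\cdot,\bullet,\Box\}$, identified with $\Omega_{L,n}$ via: column $j$ has a $\bullet$ (resp. $\Box$) in row $k$ and $\cdot$ elsewhere iff $w_j=\bullet_k$ (resp. $\Box_k$); it carries the transported dynamics.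 $\tau_{i,j}$ (resp. $\eta_{i,j}$) is the indicator that site (row $i$, column $j$) holds a $\bullet$ (resp. $\Box$); $\langle\cdot\rangle$ is expectation under the unique stationary distribution. Define $J_\bullet(i,j)=p_i\langle\tau_{i,j}\sum_{k=1}^n\eta_{k,j+1}\rangle-q_i\langle\tau_{i,j+1}\sum_{k=1}^n\eta_{k,j}\rangle$ and $J_\bullet(i)=\sum_{j=1}^L J_\bullet(i,j)$. Weights: for $i,k\in\{1,\dots,n\}$, $w_\Box(i,k)=p_1\cdots p_{i-1}q_{i+1}\cdots q_kp_{k+1}\cdots p_n$ if $i\le k$ and $w_\Box(i,k)=q_1\cdots q_kp_{k+1}\cdots p_{i-1}q_{i+1}\cdots q_n$ if $k<i$ (empty products are $1$). For a word let $b_k$ be the position of $\bullet_k$ and $C_k$ the positions strictly between $b_k$ and $b_{k+1}$ cyclically forward ($b_{n+1}=b_1$); $\mathrm{wt}(w)=\prod_k\prod_{j\in C_k}w_\Box(i_j,k)$ with $w_j=\Box_{i_j}$. For $L'\ge n$, $Z_{L',n}=\sum\mathrm{wt}(w)$ over $w\in\Omega_{L',n}$ with $w_1=\bullet_1$. *)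

theory Defs
  imports Complex_Main
begin

text \<open>Letters: Ball k is the particle of species k, Box i is a hole of type i
  (labels in 1..n). A word of length L is a list; position j (0-based) is column j+1
  of the paper; positions are read modulo L.\<close>

datatype letter = Ball nat | Box nat

definition nxt :: "nat \<Rightarrow> nat \<Rightarrow> nat" where
  "nxt n k = (if k = n then 1 else k + 1)"

definition prv :: "nat \<Rightarrow> nat \<Rightarrow> nat" where
  "prv n k = (if k = 1 then n else k - 1)"

text \<open>Cyclic forward distance from a to b on Z/LZ, with values in 1..L
  (distance L when a = b).\<close>
definition fwd :: "nat \<Rightarrow> nat \<Rightarrow> nat \<Rightarrow> nat" where
  "fwd L a b = ((b + L - a - 1) mod L) + 1"

definition bpos :: "letter list \<Rightarrow> nat \<Rightarrow> nat" where
  "bpos w k = (THE j. j < length w \<and> w ! j = Ball k)"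

definition is_ball :: "letter \<Rightarrow> bool" where
  "is_ball x = (\<exists>k. x = Ball k)"

definition gapC :: "nat \<Rightarrow> letter list \<Rightarrow> nat \<Rightarrow> nat set" where
  "gapC n w k = {j. j < length w \<and>
      fwd (length w) (bpos w k) j < fwd (length w) (bpos w k) (bpos w (nxt n k))}"

definition Omega :: "nat \<Rightarrow> nat \<Rightarrow> letter list set" where
  "Omega L n = {w. length w = L
     \<and> (\<forall>j<L. (\<exists>k\<in>{1..n}. w ! j = Ball k) \<or> (\<exists>i\<in>{1..n}. w ! j = Box i))
     \<and> (\<forall>k\<in>{1..n}. \<exists>!j. j < L \<and> w ! j = Ball k)
     \<and> (\<forall>k\<in>{1..n}. \<forall>j\<in>gapC n w k. \<not> is_ball (w ! j))}"

definition swap_pos :: "letter list \<Rightarrow> nat \<Rightarrow> nat \<Rightarrow> letter list" where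
  "swap_pos w a c = w[a := w ! c, c := w ! a]"

text \<open>(T2): bullet_{k-1} C bullet_k Box_k  ->  bullet_{k-1} Box_{k-1} C bullet_k\<close>
definition t2 :: "nat \<Rightarrow> letter list \<Rightarrow> nat \<Rightarrow> letter list" where
  "t2 n w k = (let L = length w; bk = bpos w k; bp = bpos w (prv n k); g = fwd L bp bk in
     map (\<lambda>j. if j = (bk + 1) mod L then Ball k
              else if j = (bp + 1) mod L then Box (prv n k)
              else if 2 \<le> fwd L bp j \<and> fwd L bp j \<le> g then w ! ((j + L - 1) mod L)
              else w ! j) [0..<L])"

text \<open>(T4): Box_k bullet_k C bullet_{k+1}  ->  bullet_k C Box_{k+1} bullet_{k+1}\<close>
definition t4 :: "nat \<Rightarrow> letter list \<Rightarrow> nat \<Rightarrow> letter list" where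
  "t4 n w k = (let L = length w; bk = bpos w k; bn = bpos w (nxt n k); g = fwd L bk bn in
     map (\<lambda>j. if j = (bk + L - 1) mod L then Ball k
              else if j = (bn + L - 1) mod L then Box (nxt n k)
              else if j = bk \<or> fwd L bk j + 2 \<le> g then w ! ((j + 1) mod L)
              else w ! j) [0..<L])"

text \<open>Moves of the ball k to the right ((T1)/(T2), rate p k) and to the left ((T3)/(T4), rate q k).\<close>
definition right_moves :: "nat \<Rightarrow> (nat \<Rightarrow> real) \<Rightarrow> letter list \<Rightarrow> nat \<Rightarrow> (real \<times> letter list) list" where
  "right_moves n p w k = (let L = length w; b = bpos w k; j = (b + 1) mod L in
     (case w ! j of Box i \<Rightarrow> (if i \<noteq> k then [(p k, swap_pos w b j)] else [(p k, t2 n w k)])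
                  | Ball _ \<Rightarrow> []))"

definition left_moves :: "nat \<Rightarrow> (nat \<Rightarrow> real) \<Rightarrow> letter list \<Rightarrow> nat \<Rightarrow> (real \<times> letter list) list" where
  "left_moves n q w k = (let L = length w; b = bpos w k; j = (b + L - 1) mod L in
     (case w ! j of Box i \<Rightarrow> (if i \<noteq> k then [(q k, swap_pos w b j)] else [(q k, t4 n w k)])
                  | Ball _ \<Rightarrow> []))"

definition moves :: "nat \<Rightarrow> (nat \<Rightarrow> real) \<Rightarrow> (nat \<Rightarrow> real) \<Rightarrow> letter list \<Rightarrow> (real \<times> letter list) list" where
  "moves n p q w = concat (map (\<lambda>k. right_moves n p w k @ left_moves n q w k) [1..<n+1])"

definition rate :: "nat \<Rightarrow> (nat \<Rightarrow> real) \<Rightarrow> (nat \<Rightarrow> real) \<Rightarrow> letter list \<Rightarrow> letter list \<Rightarrow> real" where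
  "rate n p q w w' = sum_list (map fst (filter (\<lambda>m. snd m = w') (moves n p q w)))"

definition out_rate :: "nat \<Rightarrow> (nat \<Rightarrow> real) \<Rightarrow> (nat \<Rightarrow> real) \<Rightarrow> letter list \<Rightarrow> real" where
  "out_rate n p q w = sum_list (map fst (moves n p q w))"

definition stationary :: "nat \<Rightarrow> nat \<Rightarrow> (nat \<Rightarrow> real) \<Rightarrow> (nat \<Rightarrow> real) \<Rightarrow> (letter list \<Rightarrow> real) \<Rightarrow> bool" where
  "stationary L n p q \<pi> =
     ((\<forall>w\<in>Omega L n. 0 \<le> \<pi> w) \<and> (\<Sum>w\<in>Omega L n. \<pi> w) = 1 \<and>
      (\<forall>w\<in>Omega L n. (\<Sum>w'\<in>Omega L n. \<pi> w' * rate n p q w' w) = \<pi> w * out_rate n p q w))"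

definition expect :: "nat \<Rightarrow> nat \<Rightarrow> (letter list \<Rightarrow> real) \<Rightarrow> (letter list \<Rightarrow> real) \<Rightarrow> real" where
  "expect L n \<pi> f = (\<Sum>w\<in>Omega L n. \<pi> w * f w)"

text \<open>tau i j: row i column j holds a bullet; sum over k of eta k j: column j holds a box.\<close>
definition tau :: "nat \<Rightarrow> nat \<Rightarrow> letter list \<Rightarrow> real" where
  "tau i j w = (if w ! j = Ball i then 1 else 0)"

definition eta :: "nat \<Rightarrow> nat \<Rightarrow> letter list \<Rightarrow> real" where
  "eta k j w = (if w ! j = Box k then 1 else 0)"

definition Jball_ij :: "nat \<Rightarrow> nat \<Rightarrow> (nat \<Rightarrow> real) \<Rightarrow> (nat \<Rightarrow> real) \<Rightarrow> (letter list \<Rightarrow> real) \<Rightarrow> nat \<Rightarrow> nat \<Rightarrow> real" where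
  "Jball_ij L n p q \<pi> i j =
     p i * expect L n \<pi> (\<lambda>w. tau i j w * (\<Sum>k=1..n. eta k ((j + 1) mod L) w))
   - q i * expect L n \<pi> (\<lambda>w. tau i ((j + 1) mod L) w * (\<Sum>k=1..n. eta k j w))"

definition Jball :: "nat \<Rightarrow> nat \<Rightarrow> (nat \<Rightarrow> real) \<Rightarrow> (nat \<Rightarrow> real) \<Rightarrow> (letter list \<Rightarrow> real) \<Rightarrow> nat \<Rightarrow> real" where
  "Jball L n p q \<pi> i = (\<Sum>j<L. Jball_ij L n p q \<pi> i j)"

definition wbox :: "nat \<Rightarrow> (nat \<Rightarrow> real) \<Rightarrow> (nat \<Rightarrow> real) \<Rightarrow> nat \<Rightarrow> nat \<Rightarrow> real" where
  "wbox n p q i k = (if i \<le> k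
     then (\<Prod>a\<in>{1..<i}. p a) * (\<Prod>a\<in>{i+1..k}. q a) * (\<Prod>a\<in>{k+1..n}. p a)
     else (\<Prod>a\<in>{1..k}. q a) * (\<Prod>a\<in>{k+1..<i}. p a) * (\<Prod>a\<in>{i+1..n}. q a))"

definition box_label :: "letter \<Rightarrow> nat" where
  "box_label x = (case x of Box i \<Rightarrow> i | Ball k \<Rightarrow> 0)"

definition wt :: "nat \<Rightarrow> (nat \<Rightarrow> real) \<Rightarrow> (nat \<Rightarrow> real) \<Rightarrow> letter list \<Rightarrow> real" where
  "wt n p q w = (\<Prod>k\<in>{1..n}. \<Prod>j\<in>gapC n w k. wbox n p q (box_label (w ! j)) k)"

definition Z :: "nat \<Rightarrow> nat \<Rightarrow> (nat \<Rightarrow> real) \<Rightarrow> (nat \<Rightarrow> real) \<Rightarrow> real" where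
  "Z L n p q = (\<Sum>w\<in>{w\<in>Omega L n. w ! 0 = Ball 1}. wt n p q w)"

end

theory Submission
  imports Defs "HOL-Library.FuncSet"
begin

text \<open>
  The transitions act on the gap vector (the numbers of boxes between consecutive balls) as a
  zero-range process on a ring of \<open>n\<close> sites, whatever the labels of the boxes: a jump of ball
  \<open>k\<close> to the right (rate \<open>p\<^sub>k\<close>) moves a particle from gap \<open>k\<close> to gap \<open>k - 1\<close>, a jump to the left
  (rate \<open>q\<^sub>k\<close>) moves one back. So the law of the gap vector under \<open>\<pi>\<close> is stationary for this
  irreducible process, and hence proportional to the product measure \<open>\<Prod>\<^sub>k x\<^sub>k ^ g\<^sub>k\<close>, which
  is stationary as soon as \<open>p\<^sub>k x\<^sub>k - q\<^sub>k x\<^sub>k\<^sub>-\<^sub>1\<close> does not depend on \<open>k\<close>. The fugacities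
  \<open>x\<^sub>k = \<Sum>\<^sub>i w\<^sub>\<box>(i, k)\<close> have this property, with constant \<open>p\<^sub>1\<cdots>p\<^sub>n - q\<^sub>1\<cdots>q\<^sub>n\<close>, and they are
  also what one gets by summing \<open>wt\<close> over the box labels for fixed ball positions, so
  \<open>Z\<^sub>L\<^sub>,\<^sub>n\<close> is the total mass of the product measure on gap vectors of size \<open>L - n\<close>.
  Finally the current of ball \<open>i\<close> is \<open>p\<^sub>i P(g\<^sub>i > 0) - q\<^sub>i P(g\<^sub>i\<^sub>-\<^sub>1 > 0)\<close>, and removing one
  particle from the occupied gap turns each of these probabilities into a fugacity times
  \<open>Z\<^sub>L\<^sub>-\<^sub>1\<^sub>,\<^sub>n / Z\<^sub>L\<^sub>,\<^sub>n\<close>.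
\<close>

section \<open>Cyclic distance\<close>

lemma fwd_eq:
  assumes a: "a < L" and b: "b < L"
  shows "fwd L a b = (if a < b then b - a else b + L - a)"
proof (cases "a < b")
  case True
  have "b + L - a - 1 = (b - a - 1) + L" using True by simp
  then have "(b + L - a - 1) mod L = (b - a - 1) mod L" by (simp only: mod_add_self2)
  also have "\<dots> = b - a - 1" using b by simp
  finally show ?thesis unfolding fwd_def using True by simp
next
  case False
  then have "(b + L - a - 1) mod L = b + L - a - 1" using a by simp
  then show ?thesis unfolding fwd_def using False a by simp
qed

lemma fwd_le: "a < L \<Longrightarrow> b < L \<Longrightarrow> fwd L a b \<le> L"
  by (auto simp add: fwd_eq)

lemma fwd_pos: "a < L \<Longrightarrow> b < L \<Longrightarrow> 1 \<le> fwd L a b"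
  by (auto simp add: fwd_eq)

lemma fwd_self: "a < L \<Longrightarrow> fwd L a a = L"
  by (simp add: fwd_eq)

lemma fwd_less_iff: "a < L \<Longrightarrow> b < L \<Longrightarrow> fwd L a b < L \<longleftrightarrow> a \<noteq> b"
  by (auto simp add: fwd_eq)

lemma pred_mod_eq: "(b::nat) < L \<Longrightarrow> (b + L - 1) mod L = (if b = 0 then L - 1 else b - 1)"
proof -
  assume b: "b < L"
  show ?thesis
  proof (cases "b = 0")
    case True
    have "L - 1 < L" using b by simp
    then show ?thesis using True by simp
  next
    case False
    then have e: "b + L - 1 = (b - 1) + L" using b by simp
    have "(b + L - 1) mod L = (b - 1) mod L" unfolding e by (rule mod_add_self2)
    also have "\<dots> = b - 1" using b by simp
    finally show ?thesis using False by simp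
  qed
qed

lemma pred_mod_eq_iff:
  assumes "x < L" "(y::nat) < L"
  shows "(x + L - 1) mod L = y \<longleftrightarrow> x = (y + 1) mod L"
proof (cases "x = 0")
  case True
  then have e: "(x + L - 1) mod L = L - 1" using assms pred_mod_eq[of x L] by simp
  show ?thesis
  proof (cases "y + 1 = L")
    case True then show ?thesis using e \<open>x = 0\<close> by simp
  next
    case False
    then have "(y + 1) mod L = y + 1" using assms by simp
    then show ?thesis using e \<open>x = 0\<close> False assms by auto
  qed
next
  case False
  then have e: "(x + L - 1) mod L = x - 1" using assms pred_mod_eq[of x L] by simp
  show ?thesis
  proof (cases "y + 1 = L")
    case True then show ?thesis using e False assms by auto
  next
    case F2: False
    then have "(y + 1) mod L = y + 1" using assms by simp
    then show ?thesis using e False F2 assms by auto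
  qed
qed

lemma fwd_succ_right:
  assumes "a < L" "x < L" "x \<noteq> a" "(x + 1) mod L \<noteq> a"
  shows "fwd L a ((x + 1) mod L) = fwd L a x + 1"
proof (cases "x + 1 = L")
  case True
  then have "(x + 1) mod L = 0" by simp
  then show ?thesis using assms True by (auto simp: fwd_eq)
next
  case False
  then have "(x + 1) mod L = x + 1" using assms by simp
  then show ?thesis using assms False by (auto simp: fwd_eq)
qed

lemma fwd_succ_left:
  assumes "b < L" "x < L" "x \<noteq> b" "x \<noteq> (b + 1) mod L"
  shows "fwd L ((b + 1) mod L) x = fwd L b x - 1"
proof (cases "b + 1 = L")
  case True
  then have "(b + 1) mod L = 0" by simp
  then show ?thesis using assms True by (auto simp: fwd_eq)
next
  case False
  then have "(b + 1) mod L = b + 1" using assms by simp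
  then show ?thesis using assms False by (auto simp: fwd_eq)
qed

lemma fwd_pred_right:
  assumes "a < L" "x < L" "x \<noteq> a" "(x + L - 1) mod L \<noteq> a"
  shows "fwd L a ((x + L - 1) mod L) = fwd L a x - 1"
proof (cases "x = 0")
  case True
  then have "(x + L - 1) mod L = L - 1" using assms pred_mod_eq[of x L] by simp
  then show ?thesis using assms True by (auto simp: fwd_eq)
next
  case False
  then have "(x + L - 1) mod L = x - 1" using assms pred_mod_eq[of x L] by simp
  then show ?thesis using assms False by (auto simp: fwd_eq)
qed

lemma fwd_pred_left:
  assumes "b < L" "y < L" "y \<noteq> b" "y \<noteq> (b + L - 1) mod L"
  shows "fwd L ((b + L - 1) mod L) y = fwd L b y + 1"
proof (cases "b = 0")
  case True
  then have "(b + L - 1) mod L = L - 1" using assms pred_mod_eq[of b L] by simp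
  then show ?thesis using assms True by (auto simp: fwd_eq)
next
  case False
  then have "(b + L - 1) mod L = b - 1" using assms pred_mod_eq[of b L] by simp
  then show ?thesis using assms False by (auto simp: fwd_eq)
qed

lemma fwd_to_succ: assumes "b < L" "2 \<le> L" shows "fwd L b ((b + 1) mod L) = 1"
proof (cases "b + 1 = L")
  case True
  then have "(b + 1) mod L = 0" by simp
  then show ?thesis using assms True by (auto simp: fwd_eq)
next
  case False
  then have "(b + 1) mod L = b + 1" using assms by simp
  then show ?thesis using assms False by (auto simp: fwd_eq)
qed

lemma fwd_to_pred: assumes "b < L" "2 \<le> L" shows "fwd L ((b + L - 1) mod L) b = 1"
proof (cases "b = 0")
  case True
  then have "(b + L - 1) mod L = L - 1" using assms pred_mod_eq[of b L] by simp
  then show ?thesis using assms True by (auto simp: fwd_eq)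
next
  case False
  then have "(b + L - 1) mod L = b - 1" using assms pred_mod_eq[of b L] by simp
  then show ?thesis using assms False by (auto simp: fwd_eq)
qed

lemma fwd_inj_right:
  assumes "a < L" "x < L" "y < L" "fwd L a x = fwd L a y"
  shows "x = y"
  using assms by (auto simp: fwd_eq split: if_splits)

lemma fwd_inj_left:
  assumes "a < L" "b < L" "x < L" "fwd L a x = fwd L b x"
  shows "a = b"
  using assms by (auto simp: fwd_eq split: if_splits)

lemma fwd_add:
  assumes "a < L" "b < L" "x < L" "fwd L a b < fwd L a x"
  shows "fwd L b x = fwd L a x - fwd L a b"
  using assms by (auto simp: fwd_eq split: if_splits)

lemma fwd_add2:
  assumes "a < L" "b < L" "x < L" "fwd L a x < fwd L b x"
  shows "fwd L b a = fwd L b x - fwd L a x"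
  using assms by (auto simp: fwd_eq split: if_splits)

lemma fwd_shift: assumes "b < L" "1 \<le> t" "t < L" shows "fwd L b ((b + t) mod L) = t"
proof (cases "b + t < L")
  case True then show ?thesis using assms by (simp add: fwd_eq)
next
  case False
  then have e: "(b + t) mod L = b + t - L" using assms by (simp add: le_mod_geq)
  have "b + t - L < L" using assms by simp
  then show ?thesis unfolding e using assms False by (simp add: fwd_eq)
qed

lemma fwd_recover: "a < L \<Longrightarrow> b < L \<Longrightarrow> (a + fwd L a b) mod L = b"
  by (auto simp: fwd_eq)

lemma card_fwd_less:
  assumes b: "b < L" and d: "1 \<le> d" "d \<le> L"
  shows "card {x. x < L \<and> fwd L b x < d} = d - 1"
proof -
  have "bij_betw (\<lambda>t. (b + t) mod L) {1..<d} {x. x < L \<and> fwd L b x < d}"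
  proof (rule bij_betw_byWitness[where f' = "\<lambda>x. fwd L b x"])
    show "\<forall>t\<in>{1..<d}. fwd L b ((b + t) mod L) = t" using fwd_shift[OF b] d by auto
    show "\<forall>x\<in>{x. x < L \<and> fwd L b x < d}. (b + fwd L b x) mod L = x"
    proof
      fix x assume x: "x \<in> {x. x < L \<and> fwd L b x < d}"
      then have xl: "x < L" "fwd L b x < d" by auto
      then have "fwd L b x < L" using d by simp
      have "fwd L b ((b + fwd L b x) mod L) = fwd L b x"
        using fwd_shift[OF b fwd_pos[OF b xl(1)]] \<open>fwd L b x < L\<close> by simp
      moreover have "(b + fwd L b x) mod L < L" using b by simp
      ultimately show "(b + fwd L b x) mod L = x" using fwd_inj_right[OF b _ xl(1)] by blast
    qed
    show "(\<lambda>t. (b + t) mod L) ` {1..<d} \<subseteq> {x. x < L \<and> fwd L b x < d}"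
      using fwd_shift[OF b] d b by auto
    show "fwd L b ` {x. x < L \<and> fwd L b x < d} \<subseteq> {1..<d}"
      using fwd_pos[OF b] by auto
  qed
  then show ?thesis using bij_betw_same_card by fastforce
qed

lemma nxt_in: "k \<in> {1..n} \<Longrightarrow> nxt n k \<in> {1..n}"
  by (auto simp: nxt_def)

lemma prv_in: "k \<in> {1..n} \<Longrightarrow> prv n k \<in> {1..n}"
  by (auto simp: prv_def)

lemma nxt_prv: "k \<in> {1..n} \<Longrightarrow> nxt n (prv n k) = k"
  by (auto simp: nxt_def prv_def)

lemma prv_nxt: "k \<in> {1..n} \<Longrightarrow> prv n (nxt n k) = k"
  by (auto simp: nxt_def prv_def)

lemma nxt_eq_self: "k \<in> {1..n} \<Longrightarrow> nxt n k = k \<longleftrightarrow> n = 1"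
  by (auto simp: nxt_def)

lemma prv_eq_self: "k \<in> {1..n} \<Longrightarrow> prv n k = k \<longleftrightarrow> n = 1"
  by (auto simp: prv_def)

lemma nxt_eq_iff: "a \<in> {1..n} \<Longrightarrow> k \<in> {1..n} \<Longrightarrow> nxt n a = k \<longleftrightarrow> a = prv n k"
  by (auto simp: nxt_def prv_def)

lemma sum_reindex_prv: "(\<Sum>k\<in>{1..n}. f (prv n k)) = (\<Sum>k\<in>{1..n}. (f k :: real))"
  by (rule sum.reindex_bij_witness[where i = "nxt n" and j = "prv n"])
     (simp_all only: nxt_prv prv_nxt prv_in nxt_in)

section \<open>Ball positions\<close>

definition in_alphabet :: "nat \<Rightarrow> letter \<Rightarrow> bool" where
  "in_alphabet n x = ((\<exists>k\<in>{1..n}. x = letter.Ball k) \<or> (\<exists>i\<in>{1..n}. x = Box i))"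

lemma in_alphabet_Box: "i \<in> {1..n} \<Longrightarrow> in_alphabet n (Box i)" unfolding in_alphabet_def by blast

lemma in_alphabet_Ball: "i \<in> {1..n} \<Longrightarrow> in_alphabet n (letter.Ball i)" unfolding in_alphabet_def by blast

text \<open>\<open>c k\<close> is the site of ball \<open>k\<close>. Going forward from ball \<open>a\<close>, the first ball met is
  ball \<open>nxt n a\<close>: this encodes the condition in \<open>Omega\<close> that no ball lies in a gap \<open>gapC\<close>.\<close>
definition cyclic_order :: "nat \<Rightarrow> nat \<Rightarrow> (nat \<Rightarrow> nat) \<Rightarrow> bool" where
  "cyclic_order L n c = ((\<forall>k\<in>{1..n}. c k < L) \<and> inj_on c {1..n} \<and>
     (\<forall>a\<in>{1..n}. \<forall>l\<in>{1..n}. fwd L (c a) (c (nxt n a)) \<le> fwd L (c a) (c l)))"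

lemma cyclic_order_lt: "cyclic_order L n c \<Longrightarrow> k \<in> {1..n} \<Longrightarrow> c k < L"
  unfolding cyclic_order_def by auto

lemma cyclic_order_inj: "cyclic_order L n c \<Longrightarrow> k \<in> {1..n} \<Longrightarrow> l \<in> {1..n} \<Longrightarrow> c k = c l \<longleftrightarrow> k = l"
  unfolding cyclic_order_def inj_on_def by blast

lemma cyclic_order_nearest: "cyclic_order L n c \<Longrightarrow> a \<in> {1..n} \<Longrightarrow> l \<in> {1..n} \<Longrightarrow>
    fwd L (c a) (c (nxt n a)) \<le> fwd L (c a) (c l)"
  unfolding cyclic_order_def by blast

lemma Omega_facts:
  assumes "w \<in> Omega L n"
  shows "length w = L" "cyclic_order L n (bpos w)"
    "\<And>x m. x < L \<Longrightarrow> w ! x = letter.Ball m \<longleftrightarrow> m \<in> {1..n} \<and> x = bpos w m"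
    "\<And>x. x < L \<Longrightarrow> in_alphabet n (w ! x)"
proof -
  note O = assms[unfolded Omega_def mem_Collect_eq]
  show len: "length w = L" using O by (elim conjE)
  have letters: "\<forall>j<L. (\<exists>k\<in>{1..n}. w ! j = letter.Ball k) \<or> (\<exists>i\<in>{1..n}. w ! j = Box i)"
    and unique: "\<forall>k\<in>{1..n}. \<exists>!j. j < L \<and> w ! j = letter.Ball k"
    and gaps_free: "\<forall>k\<in>{1..n}. \<forall>j\<in>gapC n w k. \<not> is_ball (w ! j)"
    using O by blast+
  show alphabet: "\<And>x. x < L \<Longrightarrow> in_alphabet n (w ! x)"
    using letters unfolding in_alphabet_def by blast
  have bp: "bpos w k < L \<and> w ! bpos w k = letter.Ball k" if "k \<in> {1..n}" for k
  proof -
    from unique that have "\<exists>!j. j < L \<and> w ! j = letter.Ball k" by blast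
    then show ?thesis unfolding bpos_def len by (rule theI')
  qed
  show "w ! x = letter.Ball m \<longleftrightarrow> m \<in> {1..n} \<and> x = bpos w m" if x: "x < L" for x m
  proof
    assume e: "w ! x = letter.Ball m"
    then have m: "m \<in> {1..n}" using alphabet[OF x] unfolding in_alphabet_def by auto
    from unique m have "\<exists>!j. j < L \<and> w ! j = letter.Ball m" by blast
    then show "m \<in> {1..n} \<and> x = bpos w m" using bp[OF m] m x e by blast
  next
    assume "m \<in> {1..n} \<and> x = bpos w m"
    then show "w ! x = letter.Ball m" using bp by auto
  qed
  show "cyclic_order L n (bpos w)"
    unfolding cyclic_order_def
  proof (intro conjI ballI)
    show "inj_on (bpos w) {1..n}"
    proof (rule inj_onI)
      fix x y assume "x \<in> {1..n}" "y \<in> {1..n}" "bpos w x = bpos w y"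
      then have "letter.Ball x = letter.Ball y" using bp by metis
      then show "x = y" by simp
    qed
  next
    fix a l assume a: "a \<in> {1..n}" and l: "l \<in> {1..n}"
    show "fwd L (bpos w a) (bpos w (nxt n a)) \<le> fwd L (bpos w a) (bpos w l)"
    proof (rule ccontr)
      assume "\<not> ?thesis"
      then have "bpos w l \<in> gapC n w a" unfolding gapC_def using bp[OF l] len by simp
      then show False using gaps_free a bp[OF l] unfolding is_ball_def by auto
    qed
  next
    fix k assume "k \<in> {1..n}"
    then show "bpos w k < L" using bp by auto
  qed
qed

lemma Omega_free_site_box:
  assumes w: "w \<in> Omega L n" and x: "x < L" and nb: "\<And>m. m \<in> {1..n} \<Longrightarrow> x \<noteq> bpos w m"
  shows "\<exists>i\<in>{1..n}. w ! x = Box i"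
proof -
  have "in_alphabet n (w ! x)" using Omega_facts(4)[OF w x] .
  moreover have "\<not> (\<exists>k\<in>{1..n}. w ! x = letter.Ball k)"
    using Omega_facts(3)[OF w x] nb by blast
  ultimately show ?thesis unfolding in_alphabet_def by blast
qed

lemma Omega_intro_positions:
  assumes len: "length t = L" and alphabet: "\<And>x. x < L \<Longrightarrow> in_alphabet n (t ! x)"
    and c: "cyclic_order L n c"
    and ball_iff: "\<And>x m. x < L \<Longrightarrow> t ! x = letter.Ball m \<longleftrightarrow> m \<in> {1..n} \<and> x = c m"
  shows "t \<in> Omega L n" "\<And>a. a \<in> {1..n} \<Longrightarrow> bpos t a = c a"
proof -
  have unique: "\<exists>!j. j < L \<and> t ! j = letter.Ball k" if "k \<in> {1..n}" for k
    using ball_iff cyclic_order_lt[OF c that] that by auto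
  show bp: "bpos t k = c k" if k: "k \<in> {1..n}" for k
    unfolding bpos_def len
  proof (rule the_equality)
    show "c k < L \<and> t ! c k = letter.Ball k" using ball_iff cyclic_order_lt[OF c k] k by simp
  qed (use ball_iff in blast)
  have "\<not> is_ball (t ! j)" if k: "k \<in> {1..n}" and j: "j \<in> gapC n t k" for k j
  proof
    assume "is_ball (t ! j)"
    then obtain m where m: "t ! j = letter.Ball m" unfolding is_ball_def by auto
    have "j < L" using j len unfolding gapC_def by auto
    then have mj: "m \<in> {1..n}" "j = c m" using m ball_iff by auto
    have "fwd L (c k) (c m) < fwd L (c k) (c (nxt n k))"
      using j len unfolding gapC_def bp[OF k] bp[OF nxt_in[OF k]] mj(2) by auto
    then show False using cyclic_order_nearest[OF c k mj(1)] by simp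
  qed
  then show "t \<in> Omega L n"
    unfolding Omega_def using len alphabet unique unfolding in_alphabet_def by auto
qed

lemma Omega_move_ball:
  assumes w: "w \<in> Omega L n" and k: "k \<in> {1..n}"
    and c': "cyclic_order L n ((bpos w)(k := s))"
    and len: "length t = L" and ts: "t ! s = letter.Ball k"
    and other: "\<And>x. x < L \<Longrightarrow> x \<noteq> s \<Longrightarrow>
        (\<exists>i\<in>{1..n}. t ! x = Box i) \<and> (\<forall>m\<in>{1..n}. m \<noteq> k \<longrightarrow> x \<noteq> bpos w m)
      \<or> t ! x = w ! x \<and> x \<noteq> bpos w k"
  shows "t \<in> Omega L n" "\<And>a. a \<in> {1..n} \<Longrightarrow> bpos t a = ((bpos w)(k := s)) a"
proof -
  note F = Omega_facts[OF w]
  have alphabet: "in_alphabet n (t ! x)" if x: "x < L" for x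
  proof (cases "x = s")
    case True
    then show ?thesis using ts in_alphabet_Ball[OF k] by simp
  next
    case False
    then consider i where "i \<in> {1..n}" "t ! x = Box i" | "t ! x = w ! x"
      using other[OF x] by blast
    then show ?thesis using in_alphabet_Box F(4)[OF x] by cases simp_all
  qed
  have ball_iff: "t ! x = letter.Ball m \<longleftrightarrow> m \<in> {1..n} \<and> x = ((bpos w)(k := s)) m"
    if x: "x < L" for x m
  proof (cases "x = s")
    case True
    have "m \<in> {1..n} \<Longrightarrow> s = ((bpos w)(k := s)) m \<Longrightarrow> m = k"
      using cyclic_order_inj[OF c' k, of m] by auto
    then show ?thesis using True ts k by auto
  next
    case False
    from other[OF x False] show ?thesis
    proof
      assume "(\<exists>i\<in>{1..n}. t ! x = Box i) \<and> (\<forall>m\<in>{1..n}. m \<noteq> k \<longrightarrow> x \<noteq> bpos w m)"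
      then show ?thesis using False by auto
    next
      assume "t ! x = w ! x \<and> x \<noteq> bpos w k"
      then show ?thesis using F(3)[OF x, of m] False by auto
    qed
  qed
  show "t \<in> Omega L n" "\<And>a. a \<in> {1..n} \<Longrightarrow> bpos t a = ((bpos w)(k := s)) a"
    using Omega_intro_positions[OF len alphabet c' ball_iff] by blast+
qed

lemma finite_Omega: "finite (Omega L n)"
proof (rule finite_subset)
  show "Omega L n \<subseteq> {xs. set xs \<subseteq> (letter.Ball ` {1..n} \<union> Box ` {1..n}) \<and> length xs = L}"
  proof
    fix w assume w: "w \<in> Omega L n"
    have "set w \<subseteq> (letter.Ball ` {1..n} \<union> Box ` {1..n})"
    proof
      fix y assume "y \<in> set w"
      then obtain x where x: "x < length w" "y = w ! x" by (auto simp: in_set_conv_nth)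
      then have "in_alphabet n y" using Omega_facts(4)[OF w] Omega_facts(1)[OF w] by simp
      then show "y \<in> (letter.Ball ` {1..n} \<union> Box ` {1..n})" unfolding in_alphabet_def by auto
    qed
    then show "w \<in> {xs. set xs \<subseteq> (letter.Ball ` {1..n} \<union> Box ` {1..n}) \<and> length xs = L}"
      using Omega_facts(1)[OF w] by simp
  qed
  show "finite {xs. set xs \<subseteq> (letter.Ball ` {1..n} \<union> Box ` {1..n}) \<and> length xs = L}"
    by (rule finite_lists_length_eq) simp
qed

text \<open>Ball \<open>a\<close> followed by its gap; these blocks partition the ring.\<close>
definition block :: "nat \<Rightarrow> nat \<Rightarrow> (nat \<Rightarrow> nat) \<Rightarrow> nat \<Rightarrow> nat set" where
  "block L n c a = insert (c a) {x. x < L \<and> fwd L (c a) x < fwd L (c a) (c (nxt n a))}"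

lemma card_block:
  assumes cyc: "cyclic_order L n c" and a: "a \<in> {1..n}"
  shows "card (block L n c a) = fwd L (c a) (c (nxt n a))"
proof -
  have aL: "c a < L" using cyclic_order_lt[OF cyc a] .
  have nL: "c (nxt n a) < L" using cyclic_order_lt[OF cyc nxt_in[OF a]] .
  have "c a \<notin> {x. x < L \<and> fwd L (c a) x < fwd L (c a) (c (nxt n a))}"
    using fwd_self[OF aL] fwd_le[OF aL nL] by auto
  moreover have "finite {x. x < L \<and> fwd L (c a) x < fwd L (c a) (c (nxt n a))}" by simp
  ultimately have "card (block L n c a) = Suc (card {x. x < L \<and> fwd L (c a) x < fwd L (c a) (c (nxt n a))})"
    unfolding block_def by simp
  then show ?thesis using card_fwd_less[OF aL fwd_pos[OF aL nL] fwd_le[OF aL nL]] fwd_pos[OF aL nL] by simp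
qed

lemma block_cover:
  assumes cyc: "cyclic_order L n c" and n: "1 \<le> n" and x: "x < L"
  shows "\<exists>a\<in>{1..n}. x \<in> block L n c a"
proof -
  obtain a where a: "a \<in> {1..n}" and amin: "\<forall>y. y \<in> {1..n} \<longrightarrow> fwd L (c a) x \<le> fwd L (c y) x"
    using ex_has_least_nat[of "\<lambda>a. a \<in> {1..n}" 1 "\<lambda>a. fwd L (c a) x"] n by auto
  show ?thesis
  proof (cases "\<exists>b\<in>{1..n}. x = c b")
    case True then show ?thesis unfolding block_def by auto
  next
    case nb: False
    then have False: "x \<noteq> c a" using a by auto
    have aL: "c a < L" using cyclic_order_lt[OF cyc a] .
    have na: "nxt n a \<in> {1..n}" using nxt_in[OF a] .
    have nL: "c (nxt n a) < L" using cyclic_order_lt[OF cyc na] .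
    have "fwd L (c a) x < fwd L (c a) (c (nxt n a))"
    proof (rule ccontr)
      assume "\<not> ?thesis"
      then have le: "fwd L (c a) (c (nxt n a)) \<le> fwd L (c a) x" by simp
      show False
      proof -
        have "x \<noteq> c (nxt n a)" using nb na by auto
        then have "fwd L (c a) (c (nxt n a)) \<noteq> fwd L (c a) x" using fwd_inj_right[OF aL nL x] by auto
        then have lt: "fwd L (c a) (c (nxt n a)) < fwd L (c a) x" using le by simp
        have "fwd L (c (nxt n a)) x = fwd L (c a) x - fwd L (c a) (c (nxt n a))"
          using fwd_add[OF aL nL x lt] .
        moreover have "1 \<le> fwd L (c a) (c (nxt n a))" using fwd_pos[OF aL nL] .
        ultimately have "fwd L (c (nxt n a)) x < fwd L (c a) x" using lt by simp
        then show False using amin na by force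
      qed
    qed
    then show ?thesis using a x unfolding block_def by auto
  qed
qed

lemma block_disjoint:
  assumes cyc: "cyclic_order L n c" and a: "a \<in> {1..n}" and b: "b \<in> {1..n}" and ab: "a \<noteq> b"
  shows "block L n c a \<inter> block L n c b = {}"
proof (rule ccontr)
  assume "\<not> ?thesis"
  then obtain x where xa: "x \<in> block L n c a" and xb: "x \<in> block L n c b" by blast
  have aL: "c a < L" using cyclic_order_lt[OF cyc a] .
  have bL: "c b < L" using cyclic_order_lt[OF cyc b] .
  have cab: "c a \<noteq> c b" using cyclic_order_inj[OF cyc a b] ab by simp
  have COa: "fwd L (c a) (c (nxt n a)) \<le> fwd L (c a) (c b)" using cyclic_order_nearest[OF cyc a b] .
  have COb: "fwd L (c b) (c (nxt n b)) \<le> fwd L (c b) (c a)" using cyclic_order_nearest[OF cyc b a] .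
  show False
  proof (cases "x = c a")
    case True
    then show False using xb cab COb unfolding block_def by auto
  next
    case xa': False
    then have ga: "x < L" "fwd L (c a) x < fwd L (c a) (c (nxt n a))" using xa unfolding block_def by auto
    show False
    proof (cases "x = c b")
      case True
      then show False using ga COa by simp
    next
      case False
      then have gb: "fwd L (c b) x < fwd L (c b) (c (nxt n b))" using xb unfolding block_def by auto
      consider "fwd L (c a) x < fwd L (c b) x" | "fwd L (c b) x < fwd L (c a) x" | "fwd L (c a) x = fwd L (c b) x"
        by linarith
      then show False
      proof cases
        case 1
        have "fwd L (c b) (c a) = fwd L (c b) x - fwd L (c a) x" using fwd_add2[OF aL bL ga(1) 1] .
        then have "fwd L (c b) (c a) < fwd L (c b) (c (nxt n b))" using gb by simp
        then show False using COb by simp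
      next
        case 2
        have "fwd L (c a) (c b) = fwd L (c a) x - fwd L (c b) x" using fwd_add2[OF bL aL ga(1) 2] .
        then have "fwd L (c a) (c b) < fwd L (c a) (c (nxt n a))" using ga by simp
        then show False using COa by simp
      next
        case 3
        then show False using fwd_inj_left[OF aL bL ga(1)] cab by simp
      qed
    qed
  qed
qed

lemma block_subset: "cyclic_order L n c \<Longrightarrow> a \<in> {1..n} \<Longrightarrow> block L n c a \<subseteq> {..<L}"
  unfolding block_def using cyclic_order_lt by auto

lemma sum_gap_lengths:
  assumes cyc: "cyclic_order L n c" and n: "1 \<le> n"
  shows "(\<Sum>a\<in>{1..n}. fwd L (c a) (c (nxt n a))) = L"
proof -
  have U: "(\<Union>a\<in>{1..n}. block L n c a) = {..<L}"
    using block_cover[OF cyc n] block_subset[OF cyc] by blast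
  have "card (\<Union>a\<in>{1..n}. block L n c a) = (\<Sum>a\<in>{1..n}. card (block L n c a))"
  proof (rule card_UN_disjoint)
    show "finite {1..n}" by simp
    show "\<forall>i\<in>{1..n}. finite (block L n c i)" unfolding block_def by simp
    show "\<forall>i\<in>{1..n}. \<forall>j\<in>{1..n}. i \<noteq> j \<longrightarrow> block L n c i \<inter> block L n c j = {}"
      using block_disjoint[OF cyc] by blast
  qed
  then show ?thesis using U card_block[OF cyc] by simp
qed

section \<open>Transitions move one ball by one site\<close>

lemma succ_site_free:
  assumes c: "cyclic_order L n c" and k: "k \<in> {1..n}" and d: "2 \<le> fwd L (c k) (c (nxt n k))"
    and l: "l \<in> {1..n}"
  shows "c l \<noteq> (c k + 1) mod L"
proof
  assume cl: "c l = (c k + 1) mod L"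
  have bL: "c k < L" using cyclic_order_lt[OF c k] .
  have "2 \<le> L" using d fwd_le[OF bL cyclic_order_lt[OF c nxt_in[OF k]]] by simp
  then have "fwd L (c k) (c l) = 1" using fwd_to_succ[OF bL] cl by simp
  then show False using cyclic_order_nearest[OF c k l] d by simp
qed

lemma pred_site_free:
  assumes cyc: "cyclic_order L n c" and k: "k \<in> {1..n}" and d: "2 \<le> fwd L (c (prv n k)) (c k)"
    and l: "l \<in> {1..n}"
  shows "c l \<noteq> (c k + L - 1) mod L"
proof -
  define b where "b = c k"
  define t where "t = (b + L - 1) mod L"
  have pk: "prv n k \<in> {1..n}" using prv_in[OF k] .
  have bL: "b < L" using cyclic_order_lt[OF cyc k] b_def by simp
  have L2: "2 \<le> L" using d fwd_le[OF cyclic_order_lt[OF cyc pk] bL] b_def by simp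
  have ftb: "fwd L t b = 1" using fwd_to_pred[OF bL L2] t_def by simp
  have tb: "t \<noteq> b" using ftb fwd_self[OF bL] L2 by auto
  have "c l \<noteq> t"
  proof
    assume cl: "c l = t"
    show False
    proof (cases "n = 1")
      case True
      then have "l = k" using l k by simp
      then show False using cl tb b_def by simp
    next
      case False
      then have pkk: "prv n k \<noteq> k" using prv_eq_self[OF k] by simp
      have tpk: "c (prv n k) \<noteq> t"
      proof
        assume "c (prv n k) = t"
        then have "fwd L (c (prv n k)) (c k) = 1" using ftb b_def by simp
        then show False using d by simp
      qed
      have bpk: "b \<noteq> c (prv n k)" using cyclic_order_inj[OF cyc k pk] pkk b_def by simp
      have "fwd L (c (prv n k)) t = fwd L (c (prv n k)) b - 1"
        using fwd_pred_right[OF cyclic_order_lt[OF cyc pk] bL bpk] tpk[symmetric] t_def by simp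
      moreover have "fwd L (c (prv n k)) (c (nxt n (prv n k))) \<le> fwd L (c (prv n k)) (c l)"
        using cyclic_order_nearest[OF cyc pk l] .
      ultimately show False using nxt_prv[OF k] cl d b_def by simp
    qed
  qed
  then show ?thesis unfolding t_def b_def .
qed

lemma cyclic_order_move_right:
  assumes cyc: "cyclic_order L n c" and k: "k \<in> {1..n}" and d: "2 \<le> fwd L (c k) (c (nxt n k))"
  defines "c' \<equiv> c(k := (c k + 1) mod L)"
  shows "cyclic_order L n c'"
proof -
  define b where "b = c k"
  define s where "s = (b + 1) mod L"
  have nk: "nxt n k \<in> {1..n}" using nxt_in[OF k] .
  have bL: "b < L" using cyclic_order_lt[OF cyc k] b_def by simp
  have sL: "s < L" using bL s_def by simp
  have cs: "c l \<noteq> s" if "l \<in> {1..n}" for l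
    using succ_site_free[OF cyc k d that] s_def b_def by simp
  have c'a: "c' a = (if a = k then s else c a)" for a unfolding c'_def s_def b_def by simp
  have c'L: "c' a < L" if "a \<in> {1..n}" for a using c'a[of a] sL cyclic_order_lt[OF cyc that] by auto
  have c'inj: "c' a = c' l \<longleftrightarrow> a = l" if a: "a \<in> {1..n}" and l: "l \<in> {1..n}" for a l
    using c'a[of a] c'a[of l] cs[OF a] cs[OF l] cyclic_order_inj[OF cyc a l] by auto
  have fs: "fwd L s x = fwd L b x - 1" if "x < L" "x \<noteq> b" "x \<noteq> s" for x
    using fwd_succ_left[OF bL that(1,2)] that(3) s_def by simp
  have ts: "fwd L y s = fwd L y b + 1" if "y < L" "y \<noteq> b" "y \<noteq> s" for y
    using fwd_succ_right[OF that(1) bL] that s_def by auto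
  have c'_nearest: "fwd L (c' a) (c' (nxt n a)) \<le> fwd L (c' a) (c' l)"
    if a: "a \<in> {1..n}" and l: "l \<in> {1..n}" for a l
  proof (cases "a = k")
    case True
    show ?thesis
    proof (cases "n = 1")
      case True
      then have "l = a" "nxt n a = a" using a l by (auto simp: nxt_def)
      then show ?thesis by simp
    next
      case False
      then have nkk: "nxt n k \<noteq> k" using nxt_eq_self[OF k] by simp
      show ?thesis
      proof (cases "l = k")
        case True
        then show ?thesis using \<open>a = k\<close> fwd_le[OF c'L[OF nxt_in[OF a]] c'L[OF a]] fwd_self[OF c'L[OF a]]
          using fwd_le c'L a nxt_in by metis
      next
        case False
        have "fwd L (c' a) (c' (nxt n a)) = fwd L b (c (nxt n k)) - 1"
          using \<open>a = k\<close> nkk c'a fs[OF cyclic_order_lt[OF cyc nk]] cyclic_order_inj[OF cyc nk k] cs[OF nk] b_def by simp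
        moreover have "fwd L (c' a) (c' l) = fwd L b (c l) - 1"
          using \<open>a = k\<close> False c'a fs[OF cyclic_order_lt[OF cyc l]] cyclic_order_inj[OF cyc l k] cs[OF l] b_def by simp
        moreover have "fwd L b (c (nxt n k)) \<le> fwd L b (c l)" using cyclic_order_nearest[OF cyc k l] b_def by simp
        ultimately show ?thesis by simp
      qed
    qed
  next
    case ak: False
    show ?thesis
    proof (cases "nxt n a = k")
      case True
      show ?thesis
      proof (cases "l = k")
        case True then show ?thesis using \<open>nxt n a = k\<close> by simp
      next
        case False
        have ca: "c a \<noteq> b" using cyclic_order_inj[OF cyc a k] ak b_def by simp
        have "fwd L (c' a) (c' (nxt n a)) = fwd L (c a) b + 1"
          using True ak c'a ts[OF cyclic_order_lt[OF cyc a] ca cs[OF a]] by simp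
        moreover have "fwd L (c' a) (c' l) = fwd L (c a) (c l)"
          using ak False c'a by simp
        moreover have "fwd L (c a) b \<le> fwd L (c a) (c l)" using cyclic_order_nearest[OF cyc a l] True b_def by simp
        moreover have "fwd L (c a) b \<noteq> fwd L (c a) (c l)"
          using fwd_inj_right[OF cyclic_order_lt[OF cyc a] bL cyclic_order_lt[OF cyc l]] cyclic_order_inj[OF cyc k l] False b_def by auto
        ultimately show ?thesis by simp
      qed
    next
      case nak: False
      show ?thesis
      proof (cases "l = k")
        case False then show ?thesis using ak nak c'a cyclic_order_nearest[OF cyc a l] by simp
      next
        case True
        have ca: "c a \<noteq> b" using cyclic_order_inj[OF cyc a k] ak b_def by simp
        have "fwd L (c' a) (c' l) = fwd L (c a) b + 1"
          using True ak c'a ts[OF cyclic_order_lt[OF cyc a] ca cs[OF a]] by simp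
        moreover have "fwd L (c' a) (c' (nxt n a)) = fwd L (c a) (c (nxt n a))"
          using ak nak c'a by simp
        moreover have "fwd L (c a) (c (nxt n a)) \<le> fwd L (c a) b" using cyclic_order_nearest[OF cyc a k] b_def by simp
        ultimately show ?thesis by simp
      qed
    qed
  qed
  show "cyclic_order L n c'" unfolding cyclic_order_def inj_on_def using c'L c'inj c'_nearest by blast
qed

lemma gap_move_right:
  assumes cyc: "cyclic_order L n c" and k: "k \<in> {1..n}" and d: "2 \<le> fwd L (c k) (c (nxt n k))"
    and a: "a \<in> {1..n}"
  defines "c' \<equiv> c(k := (c k + 1) mod L)"
  shows "fwd L (c' a) (c' (nxt n a)) =
       (if a = k \<and> a = prv n k then fwd L (c a) (c (nxt n a))
        else if a = k then fwd L (c a) (c (nxt n a)) - 1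
        else if a = prv n k then fwd L (c a) (c (nxt n a)) + 1
        else fwd L (c a) (c (nxt n a)))"
proof -
  define b where "b = c k"
  define s where "s = (b + 1) mod L"
  have nk: "nxt n k \<in> {1..n}" using nxt_in[OF k] .
  have bL: "b < L" using cyclic_order_lt[OF cyc k] b_def by simp
  have sL: "s < L" using bL s_def by simp
  have cs: "c l \<noteq> s" if "l \<in> {1..n}" for l
    using succ_site_free[OF cyc k d that] s_def b_def by simp
  have c'a: "c' a = (if a = k then s else c a)" for a unfolding c'_def s_def b_def by simp
  have fs: "fwd L s x = fwd L b x - 1" if "x < L" "x \<noteq> b" "x \<noteq> s" for x
    using fwd_succ_left[OF bL that(1,2)] that(3) s_def by simp
  have ts: "fwd L y s = fwd L y b + 1" if "y < L" "y \<noteq> b" "y \<noteq> s" for y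
    using fwd_succ_right[OF that(1) bL] that s_def by auto
  show "fwd L (c' a) (c' (nxt n a)) = (if a = k \<and> a = prv n k then fwd L (c a) (c (nxt n a))
        else if a = k then fwd L (c a) (c (nxt n a)) - 1
        else if a = prv n k then fwd L (c a) (c (nxt n a)) + 1
        else fwd L (c a) (c (nxt n a)))"
  proof (cases "a = k")
    case True
    show ?thesis
    proof (cases "n = 1")
      case True
      then have "nxt n a = a" "prv n k = k" using a k by (auto simp: nxt_def prv_def)
      then show ?thesis using \<open>a = k\<close> c'a fwd_self sL cyclic_order_lt[OF cyc k] by simp
    next
      case False
      then have nkk: "nxt n k \<noteq> k" "prv n k \<noteq> k" using nxt_eq_self[OF k] prv_eq_self[OF k] by auto
      have "fwd L (c' a) (c' (nxt n a)) = fwd L b (c (nxt n k)) - 1"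
        using \<open>a = k\<close> nkk c'a fs[OF cyclic_order_lt[OF cyc nk]] cyclic_order_inj[OF cyc nk k] cs[OF nk] b_def by simp
      then show ?thesis using \<open>a = k\<close> nkk b_def by simp
    qed
  next
    case ak: False
    show ?thesis
    proof (cases "a = prv n k")
      case True
      then have nak: "nxt n a = k" using nxt_eq_iff[OF a k] by simp
      have ca: "c a \<noteq> b" using cyclic_order_inj[OF cyc a k] ak b_def by simp
      have "fwd L (c' a) (c' (nxt n a)) = fwd L (c a) b + 1"
        using nak ak c'a ts[OF cyclic_order_lt[OF cyc a] ca cs[OF a]] by simp
      then show ?thesis using ak True nak b_def by simp
    next
      case False
      then have nak: "nxt n a \<noteq> k" using nxt_eq_iff[OF a k] by simp
      then show ?thesis using ak False c'a by simp
    qed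
  qed
qed

lemma cyclic_order_move_left:
  assumes cyc: "cyclic_order L n c" and k: "k \<in> {1..n}" and d: "2 \<le> fwd L (c (prv n k)) (c k)"
  defines "c' \<equiv> c(k := (c k + L - 1) mod L)"
  shows "cyclic_order L n c'"
proof -
  define b where "b = c k"
  define t where "t = (b + L - 1) mod L"
  have nk: "nxt n k \<in> {1..n}" using nxt_in[OF k] .
  have bL: "b < L" using cyclic_order_lt[OF cyc k] b_def by simp
  have tL: "t < L" using bL t_def by simp
  have cs: "c l \<noteq> t" if "l \<in> {1..n}" for l
    using pred_site_free[OF cyc k d that] t_def b_def by simp
  have c'a: "c' a = (if a = k then t else c a)" for a unfolding c'_def t_def b_def by simp
  have c'L: "c' a < L" if "a \<in> {1..n}" for a using c'a[of a] tL cyclic_order_lt[OF cyc that] by auto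
  have c'inj: "c' a = c' l \<longleftrightarrow> a = l" if a: "a \<in> {1..n}" and l: "l \<in> {1..n}" for a l
    using c'a[of a] c'a[of l] cs[OF a] cs[OF l] cyclic_order_inj[OF cyc a l] by auto
  have ft: "fwd L t x = fwd L b x + 1" if "x < L" "x \<noteq> b" "x \<noteq> t" for x
    using fwd_pred_left[OF bL that(1,2)] that(3) t_def by simp
  have tt: "fwd L y t = fwd L y b - 1" if "y < L" "y \<noteq> b" "y \<noteq> t" for y
    using fwd_pred_right[OF that(1) bL] that t_def by auto
  have c'_nearest: "fwd L (c' a) (c' (nxt n a)) \<le> fwd L (c' a) (c' l)"
    if a: "a \<in> {1..n}" and l: "l \<in> {1..n}" for a l
  proof (cases "a = k")
    case True
    show ?thesis
    proof (cases "n = 1")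
      case True
      then have "l = a" "nxt n a = a" using a l by (auto simp: nxt_def)
      then show ?thesis by simp
    next
      case False
      then have nkk: "nxt n k \<noteq> k" using nxt_eq_self[OF k] by simp
      show ?thesis
      proof (cases "l = k")
        case True
        then show ?thesis using \<open>a = k\<close> fwd_le c'L a nxt_in fwd_self by metis
      next
        case False
        have "fwd L (c' a) (c' (nxt n a)) = fwd L b (c (nxt n k)) + 1"
          using \<open>a = k\<close> nkk c'a ft[OF cyclic_order_lt[OF cyc nk]] cyclic_order_inj[OF cyc nk k] cs[OF nk] b_def by simp
        moreover have "fwd L (c' a) (c' l) = fwd L b (c l) + 1"
          using \<open>a = k\<close> False c'a ft[OF cyclic_order_lt[OF cyc l]] cyclic_order_inj[OF cyc l k] cs[OF l] b_def by simp
        moreover have "fwd L b (c (nxt n k)) \<le> fwd L b (c l)" using cyclic_order_nearest[OF cyc k l] b_def by simp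
        ultimately show ?thesis by simp
      qed
    qed
  next
    case ak: False
    have ca: "c a \<noteq> b" using cyclic_order_inj[OF cyc a k] ak b_def by simp
    show ?thesis
    proof (cases "nxt n a = k")
      case True
      show ?thesis
      proof (cases "l = k")
        case True then show ?thesis using \<open>nxt n a = k\<close> by simp
      next
        case False
        have "fwd L (c' a) (c' (nxt n a)) = fwd L (c a) b - 1"
          using True ak c'a tt[OF cyclic_order_lt[OF cyc a] ca cs[OF a]] by simp
        moreover have "fwd L (c' a) (c' l) = fwd L (c a) (c l)"
          using ak False c'a by simp
        moreover have "fwd L (c a) b \<le> fwd L (c a) (c l)" using cyclic_order_nearest[OF cyc a l] True b_def by simp
        ultimately show ?thesis by simp
      qed
    next
      case nak: False
      show ?thesis
      proof (cases "l = k")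
        case False then show ?thesis using ak nak c'a cyclic_order_nearest[OF cyc a l] by simp
      next
        case True
        have "fwd L (c' a) (c' l) = fwd L (c a) b - 1"
          using True ak c'a tt[OF cyclic_order_lt[OF cyc a] ca cs[OF a]] by simp
        moreover have "fwd L (c' a) (c' (nxt n a)) = fwd L (c a) (c (nxt n a))"
          using ak nak c'a by simp
        moreover have "fwd L (c a) (c (nxt n a)) \<le> fwd L (c a) b" using cyclic_order_nearest[OF cyc a k] b_def by simp
        moreover have "fwd L (c a) (c (nxt n a)) \<noteq> fwd L (c a) b"
          using fwd_inj_right[OF cyclic_order_lt[OF cyc a] cyclic_order_lt[OF cyc nxt_in[OF a]] bL] cyclic_order_inj[OF cyc nxt_in[OF a] k] nak b_def by auto
        ultimately show ?thesis by simp
      qed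
    qed
  qed
  show "cyclic_order L n c'" unfolding cyclic_order_def inj_on_def using c'L c'inj c'_nearest by blast
qed

lemma gap_move_left:
  assumes cyc: "cyclic_order L n c" and k: "k \<in> {1..n}" and d: "2 \<le> fwd L (c (prv n k)) (c k)"
    and a: "a \<in> {1..n}"
  defines "c' \<equiv> c(k := (c k + L - 1) mod L)"
  shows "fwd L (c' a) (c' (nxt n a)) =
       (if a = k \<and> a = prv n k then fwd L (c a) (c (nxt n a))
        else if a = prv n k then fwd L (c a) (c (nxt n a)) - 1
        else if a = k then fwd L (c a) (c (nxt n a)) + 1
        else fwd L (c a) (c (nxt n a)))"
proof -
  define b where "b = c k"
  define t where "t = (b + L - 1) mod L"
  have nk: "nxt n k \<in> {1..n}" using nxt_in[OF k] .
  have bL: "b < L" using cyclic_order_lt[OF cyc k] b_def by simp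
  have tL: "t < L" using bL t_def by simp
  have cs: "c l \<noteq> t" if "l \<in> {1..n}" for l
    using pred_site_free[OF cyc k d that] t_def b_def by simp
  have c'a: "c' a = (if a = k then t else c a)" for a unfolding c'_def t_def b_def by simp
  have ft: "fwd L t x = fwd L b x + 1" if "x < L" "x \<noteq> b" "x \<noteq> t" for x
    using fwd_pred_left[OF bL that(1,2)] that(3) t_def by simp
  have tt: "fwd L y t = fwd L y b - 1" if "y < L" "y \<noteq> b" "y \<noteq> t" for y
    using fwd_pred_right[OF that(1) bL] that t_def by auto
  show "fwd L (c' a) (c' (nxt n a)) = (if a = k \<and> a = prv n k then fwd L (c a) (c (nxt n a))
        else if a = prv n k then fwd L (c a) (c (nxt n a)) - 1
        else if a = k then fwd L (c a) (c (nxt n a)) + 1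
        else fwd L (c a) (c (nxt n a)))"
  proof (cases "a = k")
    case True
    show ?thesis
    proof (cases "n = 1")
      case True
      then have "nxt n a = a" "prv n k = k" using a k by (auto simp: nxt_def prv_def)
      then show ?thesis using \<open>a = k\<close> c'a fwd_self tL cyclic_order_lt[OF cyc k] by simp
    next
      case False
      then have nkk: "nxt n k \<noteq> k" "prv n k \<noteq> k" using nxt_eq_self[OF k] prv_eq_self[OF k] by auto
      have "fwd L (c' a) (c' (nxt n a)) = fwd L b (c (nxt n k)) + 1"
        using \<open>a = k\<close> nkk c'a ft[OF cyclic_order_lt[OF cyc nk]] cyclic_order_inj[OF cyc nk k] cs[OF nk] b_def by simp
      then show ?thesis using \<open>a = k\<close> nkk b_def by simp
    qed
  next
    case ak: False
    have ca: "c a \<noteq> b" using cyclic_order_inj[OF cyc a k] ak b_def by simp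
    show ?thesis
    proof (cases "a = prv n k")
      case True
      then have nak: "nxt n a = k" using nxt_eq_iff[OF a k] by simp
      have "fwd L (c' a) (c' (nxt n a)) = fwd L (c a) b - 1"
        using nak ak c'a tt[OF cyclic_order_lt[OF cyc a] ca cs[OF a]] by simp
      then show ?thesis using ak True nak b_def by simp
    next
      case False
      then have nak: "nxt n a \<noteq> k" using nxt_eq_iff[OF a k] by simp
      then show ?thesis using ak False c'a by simp
    qed
  qed
qed

lemma swap_target:
  assumes w: "w \<in> Omega L n" and k: "k \<in> {1..n}"
    and c': "cyclic_order L n ((bpos w)(k := s))"
    and s: "w ! s = Box i" "i \<in> {1..n}"
  shows "swap_pos w (bpos w k) s \<in> Omega L n"
    "\<And>a. a \<in> {1..n} \<Longrightarrow> bpos (swap_pos w (bpos w k) s) a = ((bpos w)(k := s)) a"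
proof -
  note F = Omega_facts[OF w]
  define b where "b = bpos w k"
  have bL: "b < L" using cyclic_order_lt[OF F(2) k] b_def by simp
  have sL: "s < L" using cyclic_order_lt[OF c' k] by simp
  have wb: "w ! b = letter.Ball k" using F(3)[OF bL] k b_def by simp
  define t where "t = swap_pos w b s"
  have len: "length t = L" unfolding t_def swap_pos_def using F(1) by simp
  have tx: "t ! x = (if x = s then letter.Ball k else if x = b then Box i else w ! x)" if "x < L" for x
    unfolding t_def swap_pos_def using that F(1) sL bL wb s(1) by (auto simp: nth_list_update)
  have b_other: "b \<noteq> bpos w m" if "m \<in> {1..n}" "m \<noteq> k" for m
    using cyclic_order_inj[OF F(2) that(1) k] that(2) b_def by simp
  have other: "(\<exists>i\<in>{1..n}. t ! x = Box i) \<and> (\<forall>m\<in>{1..n}. m \<noteq> k \<longrightarrow> x \<noteq> bpos w m)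
      \<or> t ! x = w ! x \<and> x \<noteq> bpos w k" if "x < L" "x \<noteq> s" for x
    using tx[OF that(1)] that(2) s(2) b_other b_def by auto
  have ts: "t ! s = letter.Ball k" using tx[OF sL] by simp
  have "t \<in> Omega L n"
    by (rule Omega_move_ball(1)[of w L n k s t, OF w k c' len ts]) (rule other)
  moreover have "bpos t a = ((bpos w)(k := s)) a" if "a \<in> {1..n}" for a
    by (rule Omega_move_ball(2)[of w L n k s t, OF w k c' len ts _ that]) (rule other)
  ultimately show "swap_pos w (bpos w k) s \<in> Omega L n"
    "\<And>a. a \<in> {1..n} \<Longrightarrow> bpos (swap_pos w (bpos w k) s) a = ((bpos w)(k := s)) a"
    unfolding t_def b_def by blast+
qed

lemma t2_nth:
  assumes "x < length w"
  shows "t2 n w k ! x = (let L = length w; bk = bpos w k; bp = bpos w (prv n k); g = fwd L bp bk in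
     if x = (bk + 1) mod L then letter.Ball k
     else if x = (bp + 1) mod L then Box (prv n k)
     else if 2 \<le> fwd L bp x \<and> fwd L bp x \<le> g then w ! ((x + L - 1) mod L)
     else w ! x)"
  using assms unfolding t2_def Let_def by simp

lemma t2_target:
  assumes w: "w \<in> Omega L n" and k: "k \<in> {1..n}"
    and d: "2 \<le> fwd L (bpos w k) (bpos w (nxt n k))"
  defines "c' \<equiv> (bpos w)(k := (bpos w k + 1) mod L)"
  shows "t2 n w k \<in> Omega L n"
    "\<And>a. a \<in> {1..n} \<Longrightarrow> bpos (t2 n w k) a = c' a"
proof -
  define c where "c = bpos w"
  define b where "b = c k"
  define s where "s = (b + 1) mod L"
  define pk where "pk = prv n k"
  define bp where "bp = c pk"
  define u where "u = (bp + 1) mod L"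
  define g0 where "g0 = fwd L bp b"
  note F = Omega_facts[OF w, folded c_def]
  have cyc: "cyclic_order L n c" using F(2) .
  have pkn: "pk \<in> {1..n}" using prv_in[OF k] pk_def by simp
  have npk: "nxt n pk = k" using nxt_prv[OF k] pk_def by simp
  have bL: "b < L" using cyclic_order_lt[OF cyc k] b_def by simp
  have bpL: "bp < L" using cyclic_order_lt[OF cyc pkn] bp_def by simp
  have L2: "2 \<le> L" using d fwd_le[OF bL cyclic_order_lt[OF cyc nxt_in[OF k]]] b_def c_def by simp
  have uL: "u < L" using bpL u_def by simp
  have fbu: "fwd L bp u = 1" using fwd_to_succ[OF bpL L2] u_def by simp
  have prev_nearest: "g0 \<le> fwd L bp (c m)" if "m \<in> {1..n}" for m
    using cyclic_order_nearest[OF cyc pkn that] npk g0_def bp_def b_def by simp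
  have gc': "cyclic_order L n c'" using cyclic_order_move_right[OF cyc k] d unfolding c'_def c_def by simp
  define t where "t = t2 n w k"
  have len: "length t = L" unfolding t_def t2_def Let_def using F(1) by simp
  have tx: "t ! x = (if x = s then letter.Ball k else if x = u then Box pk
      else if 2 \<le> fwd L bp x \<and> fwd L bp x \<le> g0 then w ! ((x + L - 1) mod L) else w ! x)"
    if "x < L" for x
    unfolding t_def using t2_nth[of x w n k] that F(1)
    unfolding s_def b_def c_def u_def bp_def pk_def g0_def Let_def by simp
  have u_ball: "u = c m \<Longrightarrow> m \<in> {1..n} \<Longrightarrow> m = k" for m
  proof -
    assume um: "u = c m" and m: "m \<in> {1..n}"
    have "g0 \<le> 1" using prev_nearest[OF m] um fbu by simp
    then have "g0 = fwd L bp (c m)" using fbu um fwd_pos[OF bpL bL] g0_def by simp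
    then have "b = c m" using fwd_inj_right[OF bpL bL cyclic_order_lt[OF cyc m]] g0_def by simp
    then show "m = k" using cyclic_order_inj[OF cyc k m] b_def by simp
  qed
  have seg_nb: "(x + L - 1) mod L \<noteq> c m"
    if x: "x < L" "x \<noteq> s" "x \<noteq> u" "2 \<le> fwd L bp x" "fwd L bp x \<le> g0" and m: "m \<in> {1..n}" for x m
  proof (cases "n = 1")
    case True
    then have "m = k" using m k by simp
    show ?thesis
    proof
      assume "(x + L - 1) mod L = c m"
      then have "x = s" using pred_mod_eq_iff[OF x(1) bL] \<open>m = k\<close> b_def s_def by simp
      then show False using x(2) by simp
    qed
  next
    case False
    then have pkk: "pk \<noteq> k" using prv_eq_self[OF k] pk_def by simp
    have bbp: "b \<noteq> bp" using cyclic_order_inj[OF cyc k pkn] pkk b_def bp_def by simp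
    have "g0 < L" using fwd_less_iff[OF bpL bL] bbp g0_def by simp
    then have xbp: "x \<noteq> bp" using x(5) fwd_self[OF bpL] by auto
    have ybp: "(x + L - 1) mod L \<noteq> bp"
    proof
      assume "(x + L - 1) mod L = bp"
      then have "x = u" using pred_mod_eq_iff[OF x(1) bpL] u_def by simp
      then show False using x(3) by simp
    qed
    have "fwd L bp ((x + L - 1) mod L) = fwd L bp x - 1"
      using fwd_pred_right[OF bpL x(1) xbp ybp] .
    then have "fwd L bp ((x + L - 1) mod L) < g0" using x(4,5) by simp
    then show ?thesis using prev_nearest[OF m] by auto
  qed
  have seg_nc: "x \<noteq> c m"
    if x: "x < L" "x \<noteq> s" "2 \<le> fwd L bp x" "fwd L bp x \<le> g0" and m: "m \<in> {1..n}" "m \<noteq> k" for x m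
  proof
    assume xm: "x = c m"
    then have "fwd L bp x = g0" using prev_nearest[OF m(1)] x(4) by simp
    then have "x = b" using fwd_inj_right[OF bpL x(1) bL] g0_def by simp
    then show False using xm cyclic_order_inj[OF cyc k m(1)] m(2) b_def by simp
  qed
  have other: "(\<exists>i\<in>{1..n}. t ! x = Box i) \<and> (\<forall>m\<in>{1..n}. m \<noteq> k \<longrightarrow> x \<noteq> c m)
      \<or> t ! x = w ! x \<and> x \<noteq> b" if x: "x < L" "x \<noteq> s" for x
  proof -
    consider (new_box) "x = u" | (shifted) "x \<noteq> u" "2 \<le> fwd L bp x" "fwd L bp x \<le> g0"
      | (fixed) "x \<noteq> u" "\<not> (2 \<le> fwd L bp x \<and> fwd L bp x \<le> g0)" by blast
    then show ?thesis
    proof cases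
      case new_box
      then show ?thesis using tx[OF x(1)] x(2) pkn u_ball by auto
    next
      case shifted
      have "(x + L - 1) mod L < L" using x(1) by simp
      then have "\<exists>i\<in>{1..n}. w ! ((x + L - 1) mod L) = Box i"
        using Omega_free_site_box[OF w] seg_nb[OF x shifted] c_def by metis
      then show ?thesis using tx[OF x(1)] x(2) shifted seg_nc[OF x shifted(2,3)] by auto
    next
      case fixed
      have "x \<noteq> b"
      proof
        assume "x = b"
        then have "g0 < 2" using fixed g0_def by simp
        then have "g0 = 1" using fwd_pos[OF bpL bL] g0_def by simp
        then have "b = u" using fbu fwd_inj_right[OF bpL bL uL] g0_def by simp
        then show False using \<open>x = b\<close> fixed(1) by simp
      qed
      then show ?thesis using tx[OF x(1)] x(2) fixed by auto
    qed
  qed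
  have c'_eq: "c' = (bpos w)(k := s)" unfolding c'_def s_def b_def c_def ..
  have ts: "t ! s = letter.Ball k" using tx[of s] bL s_def by simp
  have "t \<in> Omega L n"
    by (rule Omega_move_ball(1)[of w L n k s t, OF w k gc'[unfolded c'_eq] len ts]) (rule other[unfolded b_def c_def])
  moreover have "bpos t a = c' a" if "a \<in> {1..n}" for a
    unfolding c'_eq
    by (rule Omega_move_ball(2)[of w L n k s t, OF w k gc'[unfolded c'_eq] len ts _ that]) (rule other[unfolded b_def c_def])
  ultimately show "t2 n w k \<in> Omega L n" "\<And>a. a \<in> {1..n} \<Longrightarrow> bpos (t2 n w k) a = c' a"
    unfolding t_def by blast+
qed

lemma t4_nth:
  assumes "x < length w"
  shows "t4 n w k ! x = (let L = length w; bk = bpos w k; bn = bpos w (nxt n k); g = fwd L bk bn in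
     if x = (bk + L - 1) mod L then letter.Ball k
     else if x = (bn + L - 1) mod L then Box (nxt n k)
     else if x = bk \<or> fwd L bk x + 2 \<le> g then w ! ((x + 1) mod L)
     else w ! x)"
  using assms unfolding t4_def Let_def by simp

lemma t4_target:
  assumes w: "w \<in> Omega L n" and k: "k \<in> {1..n}"
    and d: "2 \<le> fwd L (bpos w (prv n k)) (bpos w k)"
  defines "c' \<equiv> (bpos w)(k := (bpos w k + L - 1) mod L)"
  shows "t4 n w k \<in> Omega L n"
    "\<And>a. a \<in> {1..n} \<Longrightarrow> bpos (t4 n w k) a = c' a"
proof -
  define c where "c = bpos w"
  define b where "b = c k"
  define s where "s = (b + L - 1) mod L"
  define nk where "nk = nxt n k"
  define bn where "bn = c nk"
  define v where "v = (bn + L - 1) mod L"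
  define g0 where "g0 = fwd L b bn"
  note F = Omega_facts[OF w, folded c_def]
  have cyc: "cyclic_order L n c" using F(2) .
  have pk: "prv n k \<in> {1..n}" using prv_in[OF k] .
  have nkn: "nk \<in> {1..n}" using nxt_in[OF k] nk_def by simp
  have bL: "b < L" using cyclic_order_lt[OF cyc k] b_def by simp
  have bnL: "bn < L" using cyclic_order_lt[OF cyc nkn] bn_def by simp
  have L2: "2 \<le> L" using d fwd_le[OF cyclic_order_lt[OF cyc pk] bL] b_def c_def by simp
  have nearest_k: "g0 \<le> fwd L b (c m)" if "m \<in> {1..n}" for m
    using cyclic_order_nearest[OF cyc k that] g0_def b_def bn_def nk_def by simp
  have gc': "cyclic_order L n c'" using cyclic_order_move_left[OF cyc k] d unfolding c'_def c_def by simp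
  define t where "t = t4 n w k"
  have len: "length t = L" unfolding t_def t4_def Let_def using F(1) by simp
  have tx: "t ! x = (if x = s then letter.Ball k else if x = v then Box nk
      else if x = b \<or> fwd L b x + 2 \<le> g0 then w ! ((x + 1) mod L) else w ! x)"
    if "x < L" for x
    unfolding t_def using t4_nth[of x w n k] that F(1)
    unfolding s_def b_def c_def v_def bn_def nk_def g0_def Let_def by simp
  have g01: "g0 = 1 \<Longrightarrow> v = b"
  proof -
    assume "g0 = 1"
    have sl: "(b + 1) mod L < L" using bL by simp
    have "fwd L b bn = fwd L b ((b + 1) mod L)" using fwd_to_succ[OF bL L2] \<open>g0 = 1\<close> g0_def by simp
    then have "bn = (b + 1) mod L" using fwd_inj_right[OF bL bnL sl] by blast
    then show "v = b" using pred_mod_eq_iff[OF bnL bL] v_def by simp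
  qed
  have v_ball: "v = c m \<Longrightarrow> m \<in> {1..n} \<Longrightarrow> m = k" for m
  proof (rule ccontr)
    assume vm: "v = c m" and m: "m \<in> {1..n}" and m_ne_k: "m \<noteq> k"
    show False
    proof (cases "n = 1")
      case True
      then show False using m_ne_k m k by simp
    next
      case False
      then have "nk \<noteq> k" using nxt_eq_self[OF k] nk_def by simp
      then have bnb: "bn \<noteq> b" using cyclic_order_inj[OF cyc nkn k] bn_def b_def by simp
      have vb: "v \<noteq> b" using vm cyclic_order_inj[OF cyc m k] m_ne_k b_def by simp
      have "fwd L b v = g0 - 1" using fwd_pred_right[OF bL bnL bnb] vb v_def g0_def by simp
      moreover have "1 \<le> g0" using fwd_pos[OF bL bnL] g0_def by simp
      ultimately show False using nearest_k[OF m] vm by simp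
    qed
  qed
  have seg_nb: "(x + 1) mod L \<noteq> c m"
    if x: "x < L" "x \<noteq> s" "x \<noteq> v" "x = b \<or> fwd L b x + 2 \<le> g0" and m: "m \<in> {1..n}" for x m
  proof -
    have "fwd L b ((x + 1) mod L) < g0"
    proof (cases "x = b")
      case True
      then have "g0 \<noteq> 1" using g01 x(3) by auto
      moreover have "1 \<le> g0" using fwd_pos[OF bL bnL] g0_def by simp
      ultimately show ?thesis using fwd_to_succ[OF bL L2] True by simp
    next
      case False
      have yb: "(x + 1) mod L \<noteq> b"
      proof
        assume "(x + 1) mod L = b"
        then have "x = s" using pred_mod_eq_iff[OF bL x(1)] s_def by simp
        then show False using x(2) by simp
      qed
      have "fwd L b ((x + 1) mod L) = fwd L b x + 1" using fwd_succ_right[OF bL x(1) False yb] .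
      then show ?thesis using x(4) False by simp
    qed
    then show ?thesis using nearest_k[OF m] by auto
  qed
  have seg_nc: "x \<noteq> c m"
    if x: "x < L" "x = b \<or> fwd L b x + 2 \<le> g0" and m: "m \<in> {1..n}" "m \<noteq> k" for x m
  proof
    assume xm: "x = c m"
    show False
    proof (cases "x = b")
      case True then show False using xm cyclic_order_inj[OF cyc k m(1)] m(2) b_def by simp
    next
      case False then show False using x(2) nearest_k[OF m(1)] xm by simp
    qed
  qed
  have other: "(\<exists>i\<in>{1..n}. t ! x = Box i) \<and> (\<forall>m\<in>{1..n}. m \<noteq> k \<longrightarrow> x \<noteq> c m)
      \<or> t ! x = w ! x \<and> x \<noteq> b" if x: "x < L" "x \<noteq> s" for x
  proof -
    consider (new_box) "x = v" | (shifted) "x \<noteq> v" "x = b \<or> fwd L b x + 2 \<le> g0"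
      | (fixed) "x \<noteq> v" "\<not> (x = b \<or> fwd L b x + 2 \<le> g0)" by blast
    then show ?thesis
    proof cases
      case new_box
      then show ?thesis using tx[OF x(1)] x(2) nkn v_ball by auto
    next
      case shifted
      have "(x + 1) mod L < L" using x(1) by simp
      then have "\<exists>i\<in>{1..n}. w ! ((x + 1) mod L) = Box i"
        using Omega_free_site_box[OF w] seg_nb[OF x shifted] c_def by metis
      then show ?thesis using tx[OF x(1)] x(2) shifted seg_nc[OF x(1) shifted(2)] by auto
    next
      case fixed
      then show ?thesis using tx[OF x(1)] x(2) by auto
    qed
  qed
  have c'_eq: "c' = (bpos w)(k := s)" unfolding c'_def s_def b_def c_def ..
  have ts: "t ! s = letter.Ball k" using tx[of s] bL s_def by simp
  have "t \<in> Omega L n"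
    by (rule Omega_move_ball(1)[of w L n k s t, OF w k gc'[unfolded c'_eq] len ts]) (rule other[unfolded b_def c_def])
  moreover have "bpos t a = c' a" if "a \<in> {1..n}" for a
    unfolding c'_eq
    by (rule Omega_move_ball(2)[of w L n k s t, OF w k gc'[unfolded c'_eq] len ts _ that]) (rule other[unfolded b_def c_def])
  ultimately show "t4 n w k \<in> Omega L n" "\<And>a. a \<in> {1..n} \<Longrightarrow> bpos (t4 n w k) a = c' a"
    unfolding t_def by blast+
qed

section \<open>The gap vector\<close>

definition gaps :: "nat \<Rightarrow> letter list \<Rightarrow> nat \<Rightarrow> nat" where
  "gaps n w = (\<lambda>a\<in>{1..n}. fwd (length w) (bpos w a) (bpos w (nxt n a)) - 1)"

text \<open>One particle moves from site \<open>a\<close> to site \<open>b\<close>; because of truncated subtraction this is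
  meaningful only when \<open>0 < g a\<close>.\<close>
definition move_unit :: "nat \<Rightarrow> nat \<Rightarrow> nat \<Rightarrow> (nat \<Rightarrow> nat) \<Rightarrow> nat \<Rightarrow> nat" where
  "move_unit n a b g = (\<lambda>j\<in>{1..n}. g j - (if j = a then 1 else 0) + (if j = b then 1 else 0))"

lemma gaps_right_move:
  assumes w: "w \<in> Omega L n" and t: "t \<in> Omega L n" and k: "k \<in> {1..n}"
    and d: "2 \<le> fwd L (bpos w k) (bpos w (nxt n k))"
    and bt: "\<And>a. a \<in> {1..n} \<Longrightarrow> bpos t a = ((bpos w)(k := (bpos w k + 1) mod L)) a"
  shows "gaps n t = move_unit n k (prv n k) (gaps n w)"
proof (rule ext)
  fix a
  note F = Omega_facts[OF w]
  note P = gap_move_right[OF F(2) k d]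
  show "gaps n t a = move_unit n k (prv n k) (gaps n w) a"
  proof (cases "a \<in> {1..n}")
    case False then show ?thesis unfolding gaps_def move_unit_def restrict_def by (simp del: atLeastAtMost_iff)
  next
    case a: True
    have e: "fwd L (bpos t a) (bpos t (nxt n a)) = fwd L (((bpos w)(k := (bpos w k + 1) mod L)) a)
        (((bpos w)(k := (bpos w k + 1) mod L)) (nxt n a))"
      using bt[OF a] bt[OF nxt_in[OF a]] by simp
    have pos: "1 \<le> fwd L (bpos w a) (bpos w (nxt n a))"
      using fwd_pos cyclic_order_lt[OF F(2) a] cyclic_order_lt[OF F(2) nxt_in[OF a]] by blast
    have "gaps n t a = fwd L (bpos t a) (bpos t (nxt n a)) - 1"
      unfolding gaps_def using a Omega_facts(1)[OF t] by simp
    also have "\<dots> = (if a = k \<and> a = prv n k then fwd L (bpos w a) (bpos w (nxt n a))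
        else if a = k then fwd L (bpos w a) (bpos w (nxt n a)) - 1
        else if a = prv n k then fwd L (bpos w a) (bpos w (nxt n a)) + 1
        else fwd L (bpos w a) (bpos w (nxt n a))) - 1" using e P[OF a] by simp
    also have "\<dots> = move_unit n k (prv n k) (gaps n w) a"
      unfolding move_unit_def gaps_def using a F(1) pos d by auto
    finally show ?thesis .
  qed
qed

lemma gaps_left_move:
  assumes w: "w \<in> Omega L n" and t: "t \<in> Omega L n" and k: "k \<in> {1..n}"
    and d: "2 \<le> fwd L (bpos w (prv n k)) (bpos w k)"
    and bt: "\<And>a. a \<in> {1..n} \<Longrightarrow> bpos t a = ((bpos w)(k := (bpos w k + L - 1) mod L)) a"
  shows "gaps n t = move_unit n (prv n k) k (gaps n w)"
proof (rule ext)
  fix a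
  note F = Omega_facts[OF w]
  note P = gap_move_left[OF F(2) k d]
  show "gaps n t a = move_unit n (prv n k) k (gaps n w) a"
  proof (cases "a \<in> {1..n}")
    case False then show ?thesis unfolding gaps_def move_unit_def restrict_def by (simp del: atLeastAtMost_iff)
  next
    case a: True
    have e: "fwd L (bpos t a) (bpos t (nxt n a)) = fwd L (((bpos w)(k := (bpos w k + L - 1) mod L)) a)
        (((bpos w)(k := (bpos w k + L - 1) mod L)) (nxt n a))"
      using bt[OF a] bt[OF nxt_in[OF a]] by simp
    have pos: "1 \<le> fwd L (bpos w a) (bpos w (nxt n a))"
      using fwd_pos cyclic_order_lt[OF F(2) a] cyclic_order_lt[OF F(2) nxt_in[OF a]] by blast
    have d': "a = prv n k \<Longrightarrow> 2 \<le> fwd L (bpos w a) (bpos w (nxt n a))"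
      using d nxt_prv[OF k] by simp
    have "gaps n t a = fwd L (bpos t a) (bpos t (nxt n a)) - 1"
      unfolding gaps_def using a Omega_facts(1)[OF t] by simp
    also have "\<dots> = (if a = k \<and> a = prv n k then fwd L (bpos w a) (bpos w (nxt n a))
        else if a = prv n k then fwd L (bpos w a) (bpos w (nxt n a)) - 1
        else if a = k then fwd L (bpos w a) (bpos w (nxt n a)) + 1
        else fwd L (bpos w a) (bpos w (nxt n a))) - 1" using e P[OF a] by simp
    also have "\<dots> = move_unit n (prv n k) k (gaps n w) a"
      unfolding move_unit_def gaps_def using a F(1) pos d' by auto
    finally show ?thesis .
  qed
qed

lemma gaps_eq: "w \<in> Omega L n \<Longrightarrow> a \<in> {1..n} \<Longrightarrow> gaps n w a = fwd L (bpos w a) (bpos w (nxt n a)) - 1"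
  unfolding gaps_def using Omega_facts(1) by simp

lemma succ_is_next_ball:
  assumes w: "w \<in> Omega L n" and k: "k \<in> {1..n}" and d: "fwd L (bpos w k) (bpos w (nxt n k)) = 1"
  shows "(bpos w k + 1) mod L = bpos w (nxt n k)"
proof -
  note F = Omega_facts[OF w]
  have bL: "bpos w k < L" using cyclic_order_lt[OF F(2) k] .
  have nL: "bpos w (nxt n k) < L" using cyclic_order_lt[OF F(2) nxt_in[OF k]] .
  show ?thesis
  proof (cases "L = 1")
    case True then show ?thesis using bL nL by simp
  next
    case False
    then have L2: "2 \<le> L" using bL by simp
    have sL: "(bpos w k + 1) mod L < L" using bL by simp
    show ?thesis using fwd_inj_right[OF bL sL nL] fwd_to_succ[OF bL L2] d by simp
  qed
qed

lemma pred_is_prev_ball: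
  assumes w: "w \<in> Omega L n" and k: "k \<in> {1..n}" and d: "fwd L (bpos w (prv n k)) (bpos w k) = 1"
  shows "(bpos w k + L - 1) mod L = bpos w (prv n k)"
proof -
  note F = Omega_facts[OF w]
  have bL: "bpos w k < L" using cyclic_order_lt[OF F(2) k] .
  have pL: "bpos w (prv n k) < L" using cyclic_order_lt[OF F(2) prv_in[OF k]] .
  have "(bpos w (prv n k) + 1) mod L = bpos w (nxt n (prv n k))"
    using succ_is_next_ball[OF w prv_in[OF k]] d nxt_prv[OF k] by simp
  then have "bpos w k = (bpos w (prv n k) + 1) mod L" using nxt_prv[OF k] by simp
  then show ?thesis using pred_mod_eq_iff[OF bL pL] by simp
qed

lemma right_moves_cases:
  assumes w: "w \<in> Omega L n" and k: "k \<in> {1..n}"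
  shows "gaps n w k = 0 \<Longrightarrow> right_moves n p w k = []"
    and "0 < gaps n w k \<Longrightarrow> \<exists>t. right_moves n p w k = [(p k, t)] \<and> t \<in> Omega L n \<and>
          gaps n t = move_unit n k (prv n k) (gaps n w)"
proof -
  note F = Omega_facts[OF w]
  have bL: "bpos w k < L" using cyclic_order_lt[OF F(2) k] .
  have nL: "bpos w (nxt n k) < L" using cyclic_order_lt[OF F(2) nxt_in[OF k]] .
  have pos: "1 \<le> fwd L (bpos w k) (bpos w (nxt n k))" using fwd_pos[OF bL nL] .
  have g: "gaps n w k = fwd L (bpos w k) (bpos w (nxt n k)) - 1" using gaps_eq[OF w k] .
  {
    assume "gaps n w k = 0"
    then have "fwd L (bpos w k) (bpos w (nxt n k)) = 1" using g pos by simp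
    then have "(bpos w k + 1) mod L = bpos w (nxt n k)" using succ_is_next_ball[OF w k] by simp
    then have "w ! ((bpos w k + 1) mod L) = letter.Ball (nxt n k)" using F(3)[OF nL] nxt_in[OF k] by simp
    then show "right_moves n p w k = []" unfolding right_moves_def Let_def F(1) by simp
  }
  {
    assume "0 < gaps n w k"
    then have d: "2 \<le> fwd L (bpos w k) (bpos w (nxt n k))" using g by simp
    have sL: "(bpos w k + 1) mod L < L" using bL by simp
    have "\<And>m. m \<in> {1..n} \<Longrightarrow> (bpos w k + 1) mod L \<noteq> bpos w m"
      using succ_site_free[OF F(2) k d] by metis
    then obtain i where i: "i \<in> {1..n}" "w ! ((bpos w k + 1) mod L) = Box i"
      using Omega_free_site_box[OF w sL] by blast
    show "\<exists>t. right_moves n p w k = [(p k, t)] \<and> t \<in> Omega L n \<and>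
          gaps n t = move_unit n k (prv n k) (gaps n w)"
    proof (cases "i = k")
      case True
      have rm: "right_moves n p w k = [(p k, t2 n w k)]"
        unfolding right_moves_def Let_def F(1) using i True by simp
      note T = t2_target[OF w k d]
      show ?thesis using rm T(1) gaps_right_move[OF w T(1) k d T(2)] by blast
    next
      case False
      have rm: "right_moves n p w k = [(p k, swap_pos w (bpos w k) ((bpos w k + 1) mod L))]"
        unfolding right_moves_def Let_def F(1) using i False by simp
      note T = swap_target[OF w k cyclic_order_move_right[OF F(2) k d] i(2,1)]
      show ?thesis using rm T(1) gaps_right_move[OF w T(1) k d T(2)] by blast
    qed
  }
qed

lemma left_moves_cases:
  assumes w: "w \<in> Omega L n" and k: "k \<in> {1..n}"
  shows "gaps n w (prv n k) = 0 \<Longrightarrow> left_moves n q w k = []"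
    and "0 < gaps n w (prv n k) \<Longrightarrow> \<exists>t. left_moves n q w k = [(q k, t)] \<and> t \<in> Omega L n \<and>
          gaps n t = move_unit n (prv n k) k (gaps n w)"
proof -
  note F = Omega_facts[OF w]
  have pk: "prv n k \<in> {1..n}" using prv_in[OF k] .
  have bL: "bpos w k < L" using cyclic_order_lt[OF F(2) k] .
  have pL: "bpos w (prv n k) < L" using cyclic_order_lt[OF F(2) pk] .
  have pos: "1 \<le> fwd L (bpos w (prv n k)) (bpos w k)" using fwd_pos[OF pL bL] .
  have g: "gaps n w (prv n k) = fwd L (bpos w (prv n k)) (bpos w k) - 1"
    using gaps_eq[OF w pk] nxt_prv[OF k] by simp
  {
    assume "gaps n w (prv n k) = 0"
    then have "fwd L (bpos w (prv n k)) (bpos w k) = 1" using g pos by simp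
    then have "(bpos w k + L - 1) mod L = bpos w (prv n k)" using pred_is_prev_ball[OF w k] by simp
    then have "w ! ((bpos w k + L - 1) mod L) = letter.Ball (prv n k)" using F(3)[OF pL] pk by simp
    then show "left_moves n q w k = []" unfolding left_moves_def Let_def F(1) by simp
  }
  {
    assume "0 < gaps n w (prv n k)"
    then have d: "2 \<le> fwd L (bpos w (prv n k)) (bpos w k)" using g by simp
    have sL: "(bpos w k + L - 1) mod L < L" using bL by simp
    have "\<And>m. m \<in> {1..n} \<Longrightarrow> (bpos w k + L - 1) mod L \<noteq> bpos w m"
      using pred_site_free[OF F(2) k d] by metis
    then obtain i where i: "i \<in> {1..n}" "w ! ((bpos w k + L - 1) mod L) = Box i"
      using Omega_free_site_box[OF w sL] by blast
    show "\<exists>t. left_moves n q w k = [(q k, t)] \<and> t \<in> Omega L n \<and>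
          gaps n t = move_unit n (prv n k) k (gaps n w)"
    proof (cases "i = k")
      case True
      have rm: "left_moves n q w k = [(q k, t4 n w k)]"
        unfolding left_moves_def Let_def F(1) using i True by simp
      note T = t4_target[OF w k d]
      show ?thesis using rm T(1) gaps_left_move[OF w T(1) k d T(2)] by blast
    next
      case False
      have rm: "left_moves n q w k = [(q k, swap_pos w (bpos w k) ((bpos w k + L - 1) mod L))]"
        unfolding left_moves_def Let_def F(1) using i False by simp
      note T = swap_target[OF w k cyclic_order_move_left[OF F(2) k d] i(2,1)]
      show ?thesis using rm T(1) gaps_left_move[OF w T(1) k d T(2)] by blast
    qed
  }
qed

definition compositions :: "nat \<Rightarrow> nat \<Rightarrow> (nat \<Rightarrow> nat) set" where
  "compositions n m = {g \<in> PiE {1..n} (\<lambda>_. {0..m}). sum g {1..n} = m}"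

lemma finite_compositions: "finite (compositions n m)"
  unfolding compositions_def by (rule finite_subset[of _ "PiE {1..n} (\<lambda>_. {0..m})"]) (auto intro: finite_PiE)

lemma compositions_iff: "g \<in> compositions n m \<longleftrightarrow> g \<in> extensional {1..n} \<and> sum g {1..n} = m"
proof
  assume "g \<in> compositions n m" then show "g \<in> extensional {1..n} \<and> sum g {1..n} = m"
    unfolding compositions_def PiE_def by auto
next
  assume a: "g \<in> extensional {1..n} \<and> sum g {1..n} = m"
  have "g j \<le> m" if "j \<in> {1..n}" for j
    using member_le_sum[of j "{1..n}" g] that a by simp
  then show "g \<in> compositions n m" unfolding compositions_def PiE_def Pi_def using a by auto
qed

lemma compositions_extensional: "g \<in> compositions n m \<Longrightarrow> g \<in> extensional {1..n}" using compositions_iff by blast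

lemma gaps_extensional: "gaps n w \<in> extensional {1..n}" unfolding gaps_def by simp

lemma move_unit_extensional: "move_unit n a b g \<in> extensional {1..n}" unfolding move_unit_def by simp

lemma gaps_in_compositions:
  assumes w: "w \<in> Omega L n" and n: "1 \<le> n"
  shows "gaps n w \<in> compositions n (L - n)"
proof -
  note F = Omega_facts[OF w]
  define d where "d a = fwd L (bpos w a) (bpos w (nxt n a))" for a
  have pos: "1 \<le> d a" if "a \<in> {1..n}" for a
    using fwd_pos[OF cyclic_order_lt[OF F(2) that] cyclic_order_lt[OF F(2) nxt_in[OF that]]] unfolding d_def .
  have S: "sum d {1..n} = L" using sum_gap_lengths[OF F(2) n] d_def by simp
  have "sum (gaps n w) {1..n} = sum (\<lambda>a. d a - 1) {1..n}"
    by (intro sum.cong) (simp_all add: gaps_eq[OF w] d_def)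
  moreover have "sum (\<lambda>a. d a - 1) {1..n} + n = L"
  proof -
    have "sum (\<lambda>a. (d a - 1) + 1) {1..n} = sum (\<lambda>a. d a - 1) {1..n} + sum (\<lambda>a. 1) {1..n}"
      by (rule sum.distrib)
    then have "sum (\<lambda>a. d a - 1) {1..n} + n = sum (\<lambda>a. (d a - 1) + 1) {1..n}" by simp
    also have "\<dots> = sum d {1..n}"
    proof (rule sum.cong)
      fix a assume "a \<in> {1..n}"
      then have "1 \<le> d a" by (rule pos)
      then show "d a - 1 + 1 = d a" by simp
    qed simp
    finally show ?thesis using S by simp
  qed
  ultimately show ?thesis unfolding compositions_iff using gaps_extensional by simp
qed

section \<open>Lumping onto a zero-range process\<close>

text \<open>A jump of ball \<open>k\<close> to the right shortens gap \<open>k\<close> and lengthens gap \<open>prv n k\<close>; a jump to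
  the left does the converse.\<close>
definition zrp_rate :: "nat \<Rightarrow> (nat \<Rightarrow> real) \<Rightarrow> (nat \<Rightarrow> real) \<Rightarrow> (nat \<Rightarrow> nat) \<Rightarrow> (nat \<Rightarrow> nat) \<Rightarrow> real" where
  "zrp_rate n p q g h = (\<Sum>k\<in>{1..n}. (if 0 < g k \<and> move_unit n k (prv n k) g = h then p k else 0)
      + (if 0 < g (prv n k) \<and> move_unit n (prv n k) k g = h then q k else 0))"

definition zrp_out_rate :: "nat \<Rightarrow> (nat \<Rightarrow> real) \<Rightarrow> (nat \<Rightarrow> real) \<Rightarrow> (nat \<Rightarrow> nat) \<Rightarrow> real" where
  "zrp_out_rate n p q g = (\<Sum>k\<in>{1..n}. (if 0 < g k then p k else 0) + (if 0 < g (prv n k) then q k else 0))"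

definition gap_fiber :: "nat \<Rightarrow> nat \<Rightarrow> (nat \<Rightarrow> nat) \<Rightarrow> letter list set" where
  "gap_fiber L n h = {w \<in> Omega L n. gaps n w = h}"

lemma finite_gap_fiber: "finite (gap_fiber L n h)"
  unfolding gap_fiber_def using finite_Omega by simp

lemma sum_list_concat_filter:
  "sum_list (map fst (filter P (concat (map f xs)))) = (\<Sum>x\<leftarrow>xs. sum_list (map fst (filter P (f x))))"
  by (induction xs) auto

lemma sum_filter_set:
  fixes xs :: "('a::comm_monoid_add \<times> 'b) list"
  assumes "finite F"
  shows "(\<Sum>y\<in>F. sum_list (map fst (filter (\<lambda>m. snd m = y) xs))) = sum_list (map fst (filter (\<lambda>m. snd m \<in> F) xs))"
proof (induction xs)
  case Nil then show ?case by simp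
next
  case (Cons x xs)
  have "(\<Sum>y\<in>F. sum_list (map fst (filter (\<lambda>m. snd m = y) (x # xs))))
      = (\<Sum>y\<in>F. (if snd x = y then fst x else 0) + sum_list (map fst (filter (\<lambda>m. snd m = y) xs)))"
    by (intro sum.cong) auto
  also have "\<dots> = (\<Sum>y\<in>F. (if snd x = y then fst x else 0)) + (\<Sum>y\<in>F. sum_list (map fst (filter (\<lambda>m. snd m = y) xs)))"
    by (simp add: sum.distrib)
  also have "(\<Sum>y\<in>F. (if snd x = y then fst x else 0)) = (if snd x \<in> F then fst x else 0)"
    using assms by (simp add: sum.delta)
  finally show ?case using Cons by simp
qed

lemma sum_list_upt_set: "(\<Sum>x\<leftarrow>[1..<n+1]. f x) = (\<Sum>x\<in>{1..n}. (f x :: 'a::comm_monoid_add))"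
proof -
  have "(\<Sum>x\<leftarrow>[1..<n+1]. f x) = sum f (set [1..<n+1])"
    by (rule sum_list_distinct_conv_sum_set) simp
  also have "set [1..<n+1] = {1..n}" by auto
  finally show ?thesis .
qed

lemma moves_sum:
  "sum_list (map fst (filter P (moves n p q w))) =
   (\<Sum>k\<in>{1..n}. sum_list (map fst (filter P (right_moves n p w k))) + sum_list (map fst (filter P (left_moves n q w k))))"
  unfolding moves_def sum_list_concat_filter by (simp only: sum_list_upt_set filter_append map_append sum_list_append)

lemma right_moves_sum:
  assumes w: "w \<in> Omega L n" and k: "k \<in> {1..n}"
  shows "sum_list (map fst (filter (\<lambda>m. snd m \<in> gap_fiber L n h) (right_moves n p w k)))
       = (if 0 < gaps n w k \<and> move_unit n k (prv n k) (gaps n w) = h then p k else 0)"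
    and "sum_list (map fst (filter (\<lambda>m. True) (right_moves n p w k))) = (if 0 < gaps n w k then p k else 0)"
proof -
  have "sum_list (map fst (filter (\<lambda>m. snd m \<in> gap_fiber L n h) (right_moves n p w k)))
       = (if 0 < gaps n w k \<and> move_unit n k (prv n k) (gaps n w) = h then p k else 0) \<and>
       sum_list (map fst (filter (\<lambda>m. True) (right_moves n p w k))) = (if 0 < gaps n w k then p k else 0)"
  proof (cases "gaps n w k = 0")
    case True then show ?thesis using right_moves_cases(1)[OF w k] by simp
  next
    case False
    then obtain t where t: "right_moves n p w k = [(p k, t)]" "t \<in> Omega L n"
        "gaps n t = move_unit n k (prv n k) (gaps n w)"
      using right_moves_cases(2)[OF w k] by auto
    show ?thesis using t False unfolding gap_fiber_def by auto
  qed
  then show "sum_list (map fst (filter (\<lambda>m. snd m \<in> gap_fiber L n h) (right_moves n p w k)))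
       = (if 0 < gaps n w k \<and> move_unit n k (prv n k) (gaps n w) = h then p k else 0)"
    and "sum_list (map fst (filter (\<lambda>m. True) (right_moves n p w k))) = (if 0 < gaps n w k then p k else 0)"
    by auto
qed

lemma left_moves_sum:
  assumes w: "w \<in> Omega L n" and k: "k \<in> {1..n}"
  shows "sum_list (map fst (filter (\<lambda>m. snd m \<in> gap_fiber L n h) (left_moves n q w k)))
       = (if 0 < gaps n w (prv n k) \<and> move_unit n (prv n k) k (gaps n w) = h then q k else 0)"
    and "sum_list (map fst (filter (\<lambda>m. True) (left_moves n q w k))) = (if 0 < gaps n w (prv n k) then q k else 0)"
proof -
  have "sum_list (map fst (filter (\<lambda>m. snd m \<in> gap_fiber L n h) (left_moves n q w k)))
       = (if 0 < gaps n w (prv n k) \<and> move_unit n (prv n k) k (gaps n w) = h then q k else 0) \<and>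
       sum_list (map fst (filter (\<lambda>m. True) (left_moves n q w k))) = (if 0 < gaps n w (prv n k) then q k else 0)"
  proof (cases "gaps n w (prv n k) = 0")
    case True then show ?thesis using left_moves_cases(1)[OF w k] by simp
  next
    case False
    then obtain t where t: "left_moves n q w k = [(q k, t)]" "t \<in> Omega L n"
        "gaps n t = move_unit n (prv n k) k (gaps n w)"
      using left_moves_cases(2)[OF w k] by auto
    show ?thesis using t False unfolding gap_fiber_def by auto
  qed
  then show "sum_list (map fst (filter (\<lambda>m. snd m \<in> gap_fiber L n h) (left_moves n q w k)))
       = (if 0 < gaps n w (prv n k) \<and> move_unit n (prv n k) k (gaps n w) = h then q k else 0)"
    and "sum_list (map fst (filter (\<lambda>m. True) (left_moves n q w k))) = (if 0 < gaps n w (prv n k) then q k else 0)"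
    by auto
qed

lemma rate_into_gap_fiber:
  assumes w: "w \<in> Omega L n"
  shows "(\<Sum>w'\<in>gap_fiber L n h. rate n p q w w') = zrp_rate n p q (gaps n w) h"
proof -
  have "(\<Sum>w'\<in>gap_fiber L n h. rate n p q w w') = sum_list (map fst (filter (\<lambda>m. snd m \<in> gap_fiber L n h) (moves n p q w)))"
    unfolding rate_def by (rule sum_filter_set[OF finite_gap_fiber])
  also have "\<dots> = zrp_rate n p q (gaps n w) h"
    unfolding moves_sum zrp_rate_def using right_moves_sum(1)[OF w] left_moves_sum(1)[OF w] by (intro sum.cong) auto
  finally show ?thesis .
qed

lemma out_rate_eq_zrp:
  assumes w: "w \<in> Omega L n"
  shows "out_rate n p q w = zrp_out_rate n p q (gaps n w)"
proof -
  have "out_rate n p q w = sum_list (map fst (filter (\<lambda>m. True) (moves n p q w)))"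
    unfolding out_rate_def by simp
  also have "\<dots> = zrp_out_rate n p q (gaps n w)"
    unfolding moves_sum zrp_out_rate_def using right_moves_sum(2)[OF w] left_moves_sum(2)[OF w] by (intro sum.cong) auto
  finally show ?thesis .
qed

definition gap_law :: "nat \<Rightarrow> nat \<Rightarrow> (letter list \<Rightarrow> real) \<Rightarrow> (nat \<Rightarrow> nat) \<Rightarrow> real" where
  "gap_law L n \<pi> h = (\<Sum>w\<in>gap_fiber L n h. \<pi> w)"

lemma sum_by_gaps:
  assumes n: "1 \<le> n"
  shows "(\<Sum>w\<in>Omega L n. \<pi> w * F (gaps n w)) = (\<Sum>g\<in>compositions n (L - n). gap_law L n \<pi> g * F g)"
proof -
  have "(\<Sum>g\<in>compositions n (L - n). \<Sum>w\<in>{x \<in> Omega L n. gaps n x = g}. \<pi> w * F (gaps n w)) = (\<Sum>w\<in>Omega L n. \<pi> w * F (gaps n w))"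
    by (rule sum.group[OF finite_Omega finite_compositions]) (use gaps_in_compositions n in auto)
  moreover have "(\<Sum>w\<in>{x \<in> Omega L n. gaps n x = g}. \<pi> w * F (gaps n w)) = gap_law L n \<pi> g * F g" for g
    unfolding gap_law_def gap_fiber_def by (simp add: sum_distrib_right)
  ultimately show ?thesis by simp
qed

lemma gap_law_stationary:
  assumes st: "stationary L n p q \<pi>" and n: "1 \<le> n"
  shows "(\<Sum>g\<in>compositions n (L - n). gap_law L n \<pi> g * zrp_rate n p q g h)
       = gap_law L n \<pi> h * zrp_out_rate n p q h"
proof -
  have balance: "(\<Sum>w'\<in>Omega L n. \<pi> w' * rate n p q w' w) = \<pi> w * out_rate n p q w"
    if "w \<in> Omega L n" for w
    using st that unfolding stationary_def by blast
  have "(\<Sum>g\<in>compositions n (L - n). gap_law L n \<pi> g * zrp_rate n p q g h)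
      = (\<Sum>w'\<in>Omega L n. \<pi> w' * zrp_rate n p q (gaps n w') h)"
    by (rule sum_by_gaps[OF n, symmetric])
  also have "\<dots> = (\<Sum>w'\<in>Omega L n. \<pi> w' * (\<Sum>w\<in>gap_fiber L n h. rate n p q w' w))"
    using rate_into_gap_fiber by (intro sum.cong) auto
  also have "\<dots> = (\<Sum>w\<in>gap_fiber L n h. \<Sum>w'\<in>Omega L n. \<pi> w' * rate n p q w' w)"
    by (subst sum.swap) (simp add: sum_distrib_left)
  also have "\<dots> = (\<Sum>w\<in>gap_fiber L n h. \<pi> w * zrp_out_rate n p q h)"
    using balance out_rate_eq_zrp unfolding gap_fiber_def by (intro sum.cong) auto
  also have "\<dots> = gap_law L n \<pi> h * zrp_out_rate n p q h"
    unfolding gap_law_def by (simp add: sum_distrib_right)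
  finally show ?thesis .
qed

lemma sum_gap_law:
  assumes "stationary L n p q \<pi>" and "1 \<le> n"
  shows "(\<Sum>g\<in>compositions n (L - n). gap_law L n \<pi> g) = 1"
  using sum_by_gaps[OF assms(2), where F = "\<lambda>_. 1" and \<pi> = \<pi> and L = L] assms(1)
  unfolding stationary_def by simp

section \<open>Stationary measures of the zero-range process\<close>

lemma stationary_proportional:
  fixes R :: "'a \<Rightarrow> 'a \<Rightarrow> real"
  assumes S: "finite S"
    and R_nonneg: "\<And>g h. 0 \<le> R g h"
    and irreducible: "\<And>g h. g \<in> S \<Longrightarrow> h \<in> S \<Longrightarrow> (g, h) \<in> {(g, h). g \<in> S \<and> h \<in> S \<and> 0 < R g h}\<^sup>*"
    and \<nu>_pos: "\<And>g. g \<in> S \<Longrightarrow> 0 < \<nu> g"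
    and \<nu>: "\<And>h. h \<in> S \<Longrightarrow> (\<Sum>g\<in>S. \<nu> g * R g h) = \<nu> h * out h"
    and \<mu>: "\<And>h. h \<in> S \<Longrightarrow> (\<Sum>g\<in>S. \<mu> g * R g h) = \<mu> h * out h"
  shows "\<exists>C. \<forall>g\<in>S. \<mu> g = C * \<nu> g"
proof (cases "S = {}")
  case False
  define r where "r g = \<mu> g / \<nu> g" for g
  have \<mu>_eq: "\<mu> g = r g * \<nu> g" if "g \<in> S" for g using \<nu>_pos[OF that] r_def by simp
  define M where "M = Max (r ` S)"
  have r_le: "r g \<le> M" if "g \<in> S" for g using Max_ge S that M_def by simp
  have "M \<in> r ` S" using Max_in[of "r ` S"] S False M_def by simp
  then obtain h0 where h0: "h0 \<in> S" "r h0 = M" by auto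
  \<comment> \<open>Maximum principle: at a maximum of \<open>\<mu> / \<nu>\<close> the balance equations force every
    predecessor to be a maximum as well.\<close>
  have max_pred: "r g = M" if h: "h \<in> S" "r h = M" and g: "g \<in> S" "0 < R g h" for g h
  proof -
    have "(\<Sum>g\<in>S. (M * \<nu> g - \<mu> g) * R g h)
        = M * (\<Sum>g\<in>S. \<nu> g * R g h) - (\<Sum>g\<in>S. \<mu> g * R g h)"
      by (simp add: sum_subtractf sum_distrib_left algebra_simps)
    also have "\<dots> = M * (\<nu> h * out h) - \<mu> h * out h"
      using \<nu>[OF h(1)] \<mu>[OF h(1)] by simp
    also have "\<dots> = 0" using \<mu>_eq[OF h(1)] h(2) by simp
    finally have sum0: "(\<Sum>g\<in>S. (M * \<nu> g - \<mu> g) * R g h) = 0" .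
    have nonneg: "0 \<le> (M * \<nu> g - \<mu> g) * R g h" if "g \<in> S" for g
    proof -
      have "r g * \<nu> g \<le> M * \<nu> g"
        using r_le[OF that] \<nu>_pos[OF that] by (intro mult_right_mono) auto
      then have "0 \<le> M * \<nu> g - \<mu> g" using \<mu>_eq[OF that] by simp
      then show ?thesis using R_nonneg[of g h] by simp
    qed
    have "\<forall>g\<in>S. (M * \<nu> g - \<mu> g) * R g h = 0"
      using sum_nonneg_eq_0_iff[OF S nonneg] sum0 by simp
    then have "(M * \<nu> g - \<mu> g) * R g h = 0" using g(1) by blast
    then have "M * \<nu> g = \<mu> g" using g(2) by simp
    then show "r g = M" using g \<mu>_eq[OF g(1)] \<nu>_pos[OF g(1)] by simp
  qed
  have r_max: "r g = M" if g: "g \<in> S" for g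
    using irreducible[OF g h0(1)]
  proof (induction rule: converse_rtrancl_induct)
    case base
    show ?case using h0(2) .
  next
    case (step y z)
    then show ?case using max_pred[of z y] by blast
  qed
  have "\<forall>g\<in>S. \<mu> g = M * \<nu> g" using \<mu>_eq r_max by simp
  then show ?thesis by blast
qed simp

lemma move_unit_apply: "j \<in> {1..n} \<Longrightarrow> move_unit n a b g j = g j - (if j = a then 1 else 0) + (if j = b then 1 else 0)"
  unfolding move_unit_def by simp

lemma move_unit_self:
  assumes g: "g \<in> extensional {1..n}" and a: "0 < g a"
  shows "move_unit n a a g = g"
proof (rule extensionalityI[OF move_unit_extensional g])
  fix j assume "j \<in> {1..n}"
  then show "move_unit n a a g j = g j" using move_unit_apply[of j n a a g] a by auto
qed

lemma move_unit_trans: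
  assumes g: "g \<in> extensional {1..n}" and a: "0 < g a"
  shows "move_unit n c b (move_unit n a c g) = move_unit n a b g"
proof (rule extensionalityI[OF move_unit_extensional move_unit_extensional])
  fix j assume j: "j \<in> {1..n}"
  show "move_unit n c b (move_unit n a c g) j = move_unit n a b g j"
    using move_unit_apply[OF j, where a=c and b=b and g="move_unit n a c g"] move_unit_apply[OF j, where a=a and b=c and g=g]
      move_unit_apply[OF j, where a=a and b=b and g=g] a by auto
qed

lemma move_unit_in_compositions:
  assumes g: "g \<in> compositions n m" and a: "a \<in> {1..n}" and b: "b \<in> {1..n}" and pos: "0 < g a"
  shows "move_unit n a b g \<in> compositions n m"
proof -
  have e: "move_unit n a b g j + (if j = a then 1 else 0) = g j + (if j = b then 1 else 0)" if "j \<in> {1..n}" for j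
    using move_unit_apply[OF that] pos by auto
  have "sum (\<lambda>j. move_unit n a b g j + (if j = a then 1 else 0)) {1..n} = sum (\<lambda>j. g j + (if j = b then 1 else 0)) {1..n}"
    using e by (intro sum.cong) auto
  then have "sum (move_unit n a b g) {1..n} + 1 = sum g {1..n} + 1"
    using a b by (simp add: sum.distrib)
  then show ?thesis using g move_unit_extensional unfolding compositions_iff by simp
qed

lemma move_unit_inverse:
  assumes g: "g \<in> extensional {1..n}" and h: "h \<in> extensional {1..n}"
    and a: "a \<in> {1..n}" and b: "b \<in> {1..n}"
  shows "(0 < g a \<and> move_unit n a b g = h) \<longleftrightarrow> (0 < h b \<and> g = move_unit n b a h)"
proof
  assume A: "0 < g a \<and> move_unit n a b g = h"
  have hb: "0 < h b" using A move_unit_apply[OF b, where a=a and b=b and g=g] by auto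
  have "g = move_unit n b a h"
  proof (rule extensionalityI[OF g move_unit_extensional])
    fix j assume j: "j \<in> {1..n}"
    show "g j = move_unit n b a h j" using A move_unit_apply[OF j, of b a h] move_unit_apply[OF j, of a b g] by auto
  qed
  then show "0 < h b \<and> g = move_unit n b a h" using hb by simp
next
  assume A: "0 < h b \<and> g = move_unit n b a h"
  have ga: "0 < g a" using A move_unit_apply[OF a, of b a h] by auto
  have "h = move_unit n a b g"
  proof (rule extensionalityI[OF h move_unit_extensional])
    fix j assume j: "j \<in> {1..n}"
    show "h j = move_unit n a b g j" using A move_unit_apply[OF j, of b a h] move_unit_apply[OF j, of a b g] by auto
  qed
  then show "0 < g a \<and> move_unit n a b g = h" using ga by simp
qed

definition prod_weight :: "nat \<Rightarrow> (nat \<Rightarrow> real) \<Rightarrow> (nat \<Rightarrow> nat) \<Rightarrow> real" where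
  "prod_weight n x g = (\<Prod>j\<in>{1..n}. x j ^ g j)"

lemma prod_weight_move_unit:
  assumes a: "a \<in> {1..n}" and b: "b \<in> {1..n}" and pos: "0 < h b"
  shows "prod_weight n x (move_unit n b a h) * x b = prod_weight n x h * x a"
proof -
  have e: "x j ^ move_unit n b a h j * (if j = b then x b else 1) = x j ^ h j * (if j = a then x a else 1)"
    if j: "j \<in> {1..n}" for j
  proof -
    have m: "move_unit n b a h j = h j - (if j = b then 1 else 0) + (if j = a then 1 else 0)" using move_unit_apply[OF j] .
    show ?thesis
    proof (cases "j = b")
      case True
      obtain r where r: "h b = Suc r" using pos by (cases "h b") auto
      then show ?thesis using m True by (cases "j = a") (auto simp: mult_ac)
    next
      case False
      then show ?thesis using m by (cases "j = a") (auto simp: power_Suc mult_ac)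
    qed
  qed
  have "(\<Prod>j\<in>{1..n}. x j ^ move_unit n b a h j * (if j = b then x b else 1)) = (\<Prod>j\<in>{1..n}. x j ^ h j * (if j = a then x a else 1))"
    using e by (rule prod.cong[OF refl])
  then show ?thesis unfolding prod_weight_def prod.distrib using a b by (simp add: prod.delta)
qed

lemma prod_weight_pos: "(\<And>j. j \<in> {1..n} \<Longrightarrow> 0 < x j) \<Longrightarrow> 0 < prod_weight n x g"
  unfolding prod_weight_def by (intro prod_pos) auto

lemma sum_prod_weight_delta:
  "(\<Sum>g\<in>compositions n m. prod_weight n x g * (if g = g0 then c else 0)) = (if g0 \<in> compositions n m then prod_weight n x g0 * c else 0)"
proof -
  have "(\<Sum>g\<in>compositions n m. prod_weight n x g * (if g = g0 then c else 0)) = (\<Sum>g\<in>compositions n m. (if g = g0 then prod_weight n x g * c else 0))"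
    by (intro sum.cong) auto
  also have "\<dots> = (if g0 \<in> compositions n m then prod_weight n x g0 * c else 0)"
    using finite_compositions by (simp add: sum.delta')
  finally show ?thesis .
qed

lemma sum_prod_weight_into:
  assumes xpos: "\<And>j. j \<in> {1..n} \<Longrightarrow> 0 < x j"
    and a: "a \<in> {1..n}" and b: "b \<in> {1..n}" and h: "h \<in> compositions n m"
  shows "(\<Sum>g\<in>compositions n m. prod_weight n x g * (if 0 < g a \<and> move_unit n a b g = h then r else 0))
       = (if 0 < h b then prod_weight n x h * (r * x a / x b) else 0)"
proof -
  have hext: "h \<in> extensional {1..n}" using h compositions_iff by blast
  have "(\<Sum>g\<in>compositions n m. prod_weight n x g * (if 0 < g a \<and> move_unit n a b g = h then r else 0))
      = (\<Sum>g\<in>compositions n m. prod_weight n x g *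
           (if g = move_unit n b a h then (if 0 < h b then r else 0) else 0))"
  proof (rule sum.cong[OF refl])
    fix g assume "g \<in> compositions n m"
    then have "g \<in> extensional {1..n}" using compositions_iff by blast
    then show "prod_weight n x g * (if 0 < g a \<and> move_unit n a b g = h then r else 0) =
        prod_weight n x g * (if g = move_unit n b a h then (if 0 < h b then r else 0) else 0)"
      using move_unit_inverse[OF _ hext a b] by auto
  qed
  also have "\<dots> = (if move_unit n b a h \<in> compositions n m
      then prod_weight n x (move_unit n b a h) * (if 0 < h b then r else 0) else 0)"
    by (rule sum_prod_weight_delta)
  also have "\<dots> = (if 0 < h b then prod_weight n x h * (r * x a / x b) else 0)"
  proof (cases "0 < h b")
    case True
    have "move_unit n b a h \<in> compositions n m" using move_unit_in_compositions[OF h b a True] .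
    moreover have "prod_weight n x (move_unit n b a h) = prod_weight n x h * x a / x b"
      using prod_weight_move_unit[where a = a and b = b and h = h and x = x, OF a b True] xpos[OF b] by (simp add: field_simps)
    ultimately show ?thesis using True by simp
  qed simp
  finally show ?thesis .
qed

lemma prod_weight_stationary:
  assumes xpos: "\<And>j. j \<in> {1..n} \<Longrightarrow> 0 < x j"
    and flux: "\<And>k. k \<in> {1..n} \<Longrightarrow> p k * x k - q k * x (prv n k) = D"
    and h: "h \<in> compositions n m"
  shows "(\<Sum>g\<in>compositions n m. prod_weight n x g * zrp_rate n p q g h) = prod_weight n x h * zrp_out_rate n p q h"
proof -
  have "(\<Sum>g\<in>compositions n m. prod_weight n x g * zrp_rate n p q g h) =
      (\<Sum>k\<in>{1..n}. (\<Sum>g\<in>compositions n m. prod_weight n x g * (if 0 < g k \<and> move_unit n k (prv n k) g = h then p k else 0))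
        + (\<Sum>g\<in>compositions n m. prod_weight n x g * (if 0 < g (prv n k) \<and> move_unit n (prv n k) k g = h then q k else 0)))"
    unfolding zrp_rate_def by (simp add: sum_distrib_left sum.distrib distrib_left sum.swap[of _ "compositions n m"])
  also have "\<dots> = (\<Sum>k\<in>{1..n}. (if 0 < h (prv n k) then prod_weight n x h * (p k * x k / x (prv n k)) else 0)
        + (if 0 < h k then prod_weight n x h * (q k * x (prv n k) / x k) else 0))"
    using sum_prod_weight_into[OF xpos _ prv_in h] sum_prod_weight_into[OF xpos prv_in _ h]
    by (intro sum.cong) auto
  also have "\<dots> = (\<Sum>k\<in>{1..n}. (if 0 < h (prv n k) then prod_weight n x h * (q k + D / x (prv n k)) else 0)
        + (if 0 < h k then prod_weight n x h * (p k - D / x k) else 0))"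
  proof (rule sum.cong[OF refl])
    fix k assume k: "k \<in> {1..n}"
    have xk: "0 < x k" "0 < x (prv n k)" using xpos[OF k] xpos[OF prv_in[OF k]] by auto
    have "p k * x k / x (prv n k) = q k + D / x (prv n k)" using flux[OF k] xk by (simp add: field_simps)
    moreover have "q k * x (prv n k) / x k = p k - D / x k" using flux[OF k] xk by (simp add: field_simps)
    ultimately show "(if 0 < h (prv n k) then prod_weight n x h * (p k * x k / x (prv n k)) else 0)
        + (if 0 < h k then prod_weight n x h * (q k * x (prv n k) / x k) else 0) =
        (if 0 < h (prv n k) then prod_weight n x h * (q k + D / x (prv n k)) else 0)
        + (if 0 < h k then prod_weight n x h * (p k - D / x k) else 0)" by simp
  qed
  also have "\<dots> = (\<Sum>k\<in>{1..n}. prod_weight n x h * ((if 0 < h k then p k else 0) + (if 0 < h (prv n k) then q k else 0))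
      + prod_weight n x h * D * ((if 0 < h (prv n k) then 1 / x (prv n k) else 0) - (if 0 < h k then 1 / x k else 0)))"
    by (intro sum.cong[OF refl]) (simp add: algebra_simps)
  also have "\<dots> = prod_weight n x h * zrp_out_rate n p q h + prod_weight n x h * D *
      ((\<Sum>k\<in>{1..n}. (if 0 < h (prv n k) then 1 / x (prv n k) else 0)) - (\<Sum>k\<in>{1..n}. (if 0 < h k then 1 / x k else 0)))"
    unfolding zrp_out_rate_def sum.distrib by (simp only: sum_subtractf sum.distrib flip: sum_distrib_left)
  also have "(\<Sum>k\<in>{1..n}. (if 0 < h (prv n k) then 1 / x (prv n k) else 0)) = (\<Sum>k\<in>{1..n}. (if 0 < h k then 1 / x k else 0))"
    by (rule sum_reindex_prv[where f = "\<lambda>k. if 0 < h k then 1 / x k else 0"])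
  finally show ?thesis by simp
qed

definition zrp_edges :: "nat \<Rightarrow> nat \<Rightarrow> (nat \<Rightarrow> real) \<Rightarrow> (nat \<Rightarrow> real) \<Rightarrow> ((nat \<Rightarrow> nat) \<times> (nat \<Rightarrow> nat)) set" where
  "zrp_edges n m p q = {(g, h). g \<in> compositions n m \<and> h \<in> compositions n m \<and> 0 < zrp_rate n p q g h}"

lemma zrp_rate_nonneg:
  assumes "\<And>k. k \<in> {1..n} \<Longrightarrow> 0 < p k \<and> 0 < q k"
  shows "0 \<le> zrp_rate n p q g h"
  unfolding zrp_rate_def using assms by (intro sum_nonneg) (auto simp: less_imp_le)

lemma zrp_rate_pos_right:
  assumes pq: "\<And>k. k \<in> {1..n} \<Longrightarrow> 0 < p k \<and> 0 < q k" and k: "k \<in> {1..n}" and g: "0 < g k"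
  shows "0 < zrp_rate n p q g (move_unit n k (prv n k) g)"
  unfolding zrp_rate_def
proof (rule sum_pos2[OF _ k])
  fix i assume i: "i \<in> {1..n}"
  show "0 \<le> (if 0 < g i \<and> move_unit n i (prv n i) g = move_unit n k (prv n k) g then p i else 0) +
    (if 0 < g (prv n i) \<and> move_unit n (prv n i) i g = move_unit n k (prv n k) g then q i else 0)"
    using pq[OF i] by (auto simp: less_imp_le)
qed (use pq[OF k] g in \<open>auto simp: less_imp_le add_pos_nonneg add_nonneg_pos\<close>)

lemma zrp_rate_pos_left:
  assumes pq: "\<And>k. k \<in> {1..n} \<Longrightarrow> 0 < p k \<and> 0 < q k" and k: "k \<in> {1..n}" and g: "0 < g (prv n k)"
  shows "0 < zrp_rate n p q g (move_unit n (prv n k) k g)"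
  unfolding zrp_rate_def
proof (rule sum_pos2[OF _ k])
  fix i assume i: "i \<in> {1..n}"
  show "0 \<le> (if 0 < g i \<and> move_unit n i (prv n i) g = move_unit n (prv n k) k g then p i else 0) +
    (if 0 < g (prv n i) \<and> move_unit n (prv n i) i g = move_unit n (prv n k) k g then q i else 0)"
    using pq[OF i] by (auto simp: less_imp_le)
qed (use pq[OF k] g in \<open>auto simp: less_imp_le add_pos_nonneg add_nonneg_pos\<close>)

lemma zrp_edge_adjacent:
  assumes pq: "\<And>k. k \<in> {1..n} \<Longrightarrow> 0 < p k \<and> 0 < q k"
    and a: "a \<in> {1..n}" and a': "a' \<in> {1..n}" and adj: "a' = nxt n a \<or> a' = prv n a"
    and g: "g \<in> compositions n m" and ga: "0 < g a"
  shows "(g, move_unit n a a' g) \<in> zrp_edges n m p q"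
proof -
  from adj have "0 < zrp_rate n p q g (move_unit n a a' g)"
  proof
    assume "a' = nxt n a"
    then have "a = prv n a'" using prv_nxt[OF a] by simp
    then show ?thesis using zrp_rate_pos_left[where p = p and q = q and g = g, OF pq a'] ga by simp
  next
    assume "a' = prv n a"
    then show ?thesis using zrp_rate_pos_right[where p = p and q = q and g = g, OF pq a ga] by simp
  qed
  then show ?thesis unfolding zrp_edges_def using g move_unit_in_compositions[OF g a a' ga] by simp
qed

lemma zrp_path_move_unit:
  assumes pq: "\<And>k. k \<in> {1..n} \<Longrightarrow> 0 < p k \<and> 0 < q k" and b: "b \<in> {1..n}"
  shows "a \<in> {1..n} \<Longrightarrow> g \<in> compositions n m \<Longrightarrow> 0 < g a \<Longrightarrow>
    (g, move_unit n a b g) \<in> (zrp_edges n m p q)\<^sup>*"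
proof (induction "if a \<le> b then b - a else a - b" arbitrary: a g rule: less_induct)
  case less
  note a = less.prems(1) and g = less.prems(2) and ga = less.prems(3)
  show ?case
  proof (cases "a = b")
    case True
    then show ?thesis using move_unit_self[OF compositions_extensional[OF g] ga] by simp
  next
    case False
    define a' where "a' = (if a < b then a + 1 else a - 1)"
    have a': "a' \<in> {1..n}" using a b False unfolding a'_def by auto
    have adj: "a' = nxt n a \<or> a' = prv n a" using a b False unfolding a'_def nxt_def prv_def by auto
    define g' where "g' = move_unit n a a' g"
    have step: "(g, g') \<in> zrp_edges n m p q"
      unfolding g'_def by (rule zrp_edge_adjacent[OF pq a a' adj g ga])
    have g': "g' \<in> compositions n m" "0 < g' a'"
      using move_unit_in_compositions[OF g a a' ga] move_unit_apply[OF a', of a a' g] adj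
      unfolding g'_def a'_def by (auto split: if_splits)
    have "(if a' \<le> b then b - a' else a' - b) < (if a \<le> b then b - a else a - b)"
      using False unfolding a'_def by auto
    then have "(g', move_unit n a' b g') \<in> (zrp_edges n m p q)\<^sup>*" by (rule less.hyps[OF _ a' g'])
    moreover have "move_unit n a' b g' = move_unit n a b g"
      using move_unit_trans[OF compositions_extensional[OF g] ga] g'_def by simp
    ultimately show ?thesis using step by (simp add: converse_rtrancl_into_rtrancl)
  qed
qed

definition l1_dist :: "nat \<Rightarrow> (nat \<Rightarrow> nat) \<Rightarrow> (nat \<Rightarrow> nat) \<Rightarrow> nat" where
  "l1_dist n g h = (\<Sum>j\<in>{1..n}. (g j - h j) + (h j - g j))"

lemma zrp_connected:
  assumes pq: "\<And>k. k \<in> {1..n} \<Longrightarrow> 0 < p k \<and> 0 < q k" and h: "h \<in> compositions n m"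
  shows "g \<in> compositions n m \<Longrightarrow> (g, h) \<in> (zrp_edges n m p q)\<^sup>*"
proof (induction "l1_dist n g h" arbitrary: g rule: less_induct)
  case less
  note g = less.prems
  show ?case
  proof (cases "g = h")
    case True then show ?thesis by simp
  next
    case False
    then obtain j where j: "j \<in> {1..n}" "g j \<noteq> h j"
      using extensionalityI[OF compositions_extensional[OF g] compositions_extensional[OF h]] by blast
    have sg: "sum g {1..n} = m" and sh: "sum h {1..n} = m" using g h compositions_iff by auto
    have exa: "\<exists>a\<in>{1..n}. h a < g a"
    proof (rule ccontr)
      assume "\<not> ?thesis"
      then have le: "\<forall>a\<in>{1..n}. g a \<le> h a" by auto
      then have "g j < h j" using j by force
      then have "\<exists>a\<in>{1..n}. g a < h a" using j by blast
      then have "sum g {1..n} < sum h {1..n}" using sum_strict_mono_ex1[OF _ le] by simp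
      then show False using sg sh by simp
    qed
    have exb: "\<exists>b\<in>{1..n}. g b < h b"
    proof (rule ccontr)
      assume "\<not> ?thesis"
      then have le: "\<forall>a\<in>{1..n}. h a \<le> g a" by auto
      then have "h j < g j" using j by force
      then have "\<exists>a\<in>{1..n}. h a < g a" using j by blast
      then have "sum h {1..n} < sum g {1..n}" using sum_strict_mono_ex1[OF _ le] by simp
      then show False using sg sh by simp
    qed
    obtain a where a: "a \<in> {1..n}" "h a < g a" using exa by blast
    obtain b where b: "b \<in> {1..n}" "g b < h b" using exb by blast
    have ab: "a \<noteq> b" using a b by auto
    have ga: "0 < g a" using a by simp
    define g' where "g' = move_unit n a b g"
    have g'G: "g' \<in> compositions n m" using move_unit_in_compositions[OF g a(1) b(1) ga] g'_def by simp
    have p1: "(g, g') \<in> (zrp_edges n m p q)\<^sup>*"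
      using zrp_path_move_unit[OF pq b(1) a(1) g ga] g'_def by simp
    have e: "(g' i - h i) + (h i - g' i) + (if i = a then 1 else 0) + (if i = b then 1 else 0)
        = (g i - h i) + (h i - g i)" if i: "i \<in> {1..n}" for i
      using move_unit_apply[OF i, where a=a and b=b and g=g] a b ab g'_def by auto
    have "l1_dist n g' h + 2 = l1_dist n g h"
    proof -
      have "(\<Sum>i\<in>{1..n}. (g' i - h i) + (h i - g' i) + (if i = a then 1 else 0) + (if i = b then 1 else 0))
          = l1_dist n g h" unfolding l1_dist_def using e by (intro sum.cong) auto
      then show ?thesis unfolding l1_dist_def using a b by (simp add: sum.distrib)
    qed
    then have "l1_dist n g' h < l1_dist n g h" by simp
    then have "(g', h) \<in> (zrp_edges n m p q)\<^sup>*" using less.hyps g'G by blast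
    then show ?thesis using p1 by simp
  qed
qed

section \<open>Fugacities\<close>

definition prod_ivl :: "nat \<Rightarrow> nat \<Rightarrow> (nat \<Rightarrow> real) \<Rightarrow> real" where
  "prod_ivl a b f = (\<Prod>j\<in>{a..<b}. f j)"

lemma prod_ivl_atLeastAtMost: "(\<Prod>j\<in>{a..b}. f j) = prod_ivl a (b + 1) f"
  unfolding prod_ivl_def by (simp add: atLeastLessThanSuc_atLeastAtMost)

lemma prod_ivl_empty: "b \<le> a \<Longrightarrow> prod_ivl a b f = 1" unfolding prod_ivl_def by simp

lemma prod_ivl_top: "a \<le> b \<Longrightarrow> prod_ivl a (b + 1) f = prod_ivl a b f * f b"
  unfolding prod_ivl_def by (simp add: prod.atLeastLessThan_Suc)

lemma prod_ivl_bot: "a < b \<Longrightarrow> prod_ivl a b f = f a * prod_ivl (a + 1) b f"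
  unfolding prod_ivl_def by (simp add: prod.atLeast_Suc_lessThan)

lemma prod_ivl_concat: "a \<le> b \<Longrightarrow> b \<le> c \<Longrightarrow> prod_ivl a b f * prod_ivl b c f = prod_ivl a c f"
  unfolding prod_ivl_def by (simp add: prod.atLeastLessThan_concat)

lemma prod_ivl_one: "prod_ivl (Suc 0) (Suc (Suc 0)) f = f 1" "prod_ivl 1 2 f = f 1"
  unfolding prod_ivl_def by (simp_all add: numeral_2_eq_2)

lemma prod_ivl_pos: "(\<And>j. j \<in> {1..n} \<Longrightarrow> 0 < f j) \<Longrightarrow> 1 \<le> a \<Longrightarrow> b \<le> n + 1 \<Longrightarrow> 0 < prod_ivl a b f"
  unfolding prod_ivl_def by (intro prod_pos) auto

lemma wbox_prod_ivl: "wbox n p q i k = (if i \<le> k then prod_ivl 1 i p * prod_ivl (i + 1) (k + 1) q * prod_ivl (k + 1) (n + 1) p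
     else prod_ivl 1 (k + 1) q * prod_ivl (k + 1) i p * prod_ivl (i + 1) (n + 1) q)"
  unfolding wbox_def prod_ivl_atLeastAtMost
  by (simp add: prod_ivl_def atLeastLessThanSuc_atLeastAtMost)

lemma wbox_pos:
  assumes pq: "\<And>j. j \<in> {1..n} \<Longrightarrow> 0 < p j \<and> 0 < q j" and i: "i \<in> {1..n}" and k: "k \<in> {1..n}"
  shows "0 < wbox n p q i k"
proof -
  have pp: "\<And>j. j \<in> {1..n} \<Longrightarrow> 0 < p j" and qq: "\<And>j. j \<in> {1..n} \<Longrightarrow> 0 < q j" using pq by auto
  show ?thesis unfolding wbox_prod_ivl using i k
    by (auto intro!: mult_pos_pos prod_ivl_pos[OF pp] prod_ivl_pos[OF qq])
qed

lemma wbox_flux: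
  assumes k: "k \<in> {1..n}" and i: "i \<in> {1..n}"
  shows "p k * wbox n p q i k - q k * wbox n p q i (prv n k)
       = (if i = k then prod_ivl 1 (n + 1) p - prod_ivl 1 (n + 1) q else 0)"
proof (cases "k = 1")
  case True
  then have pk: "prv n k = n" unfolding prv_def by simp
  show ?thesis
  proof (cases "i = 1")
    case True
    have "p k * wbox n p q i k = prod_ivl 1 (n + 1) p"
      using \<open>k = 1\<close> True k prod_ivl_bot[of 1 "n + 1" p] by (simp add: wbox_prod_ivl prod_ivl_empty)
    moreover have "q k * wbox n p q i (prv n k) = prod_ivl 1 (n + 1) q"
      using \<open>k = 1\<close> True k pk prod_ivl_bot[of 1 "n + 1" q] by (simp add: wbox_prod_ivl prod_ivl_empty)
    ultimately show ?thesis using True \<open>k = 1\<close> by simp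
  next
    case False
    then have i2: "2 \<le> i" "i \<le> n" using i by auto
    have "wbox n p q i k = q 1 * prod_ivl 2 i p * prod_ivl (i + 1) (n + 1) q"
      using \<open>k = 1\<close> i2 by (simp add: wbox_prod_ivl prod_ivl_one prod_ivl_empty numeral_2_eq_2)
    moreover have "wbox n p q i (prv n k) = p 1 * prod_ivl 2 i p * prod_ivl (i + 1) (n + 1) q"
      using pk i2 prod_ivl_bot[of 1 i p] by (simp add: wbox_prod_ivl prod_ivl_empty numeral_2_eq_2)
    ultimately show ?thesis using False \<open>k = 1\<close> by simp
  qed
next
  case False
  then have k2: "2 \<le> k" "k \<le> n" using k by auto
  then have pk: "prv n k = k - 1" unfolding prv_def by simp
  obtain k' where k': "k = k' + 1" using k2 by (cases k) auto
  have pk': "prv n k = k'" using pk k' by simp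
  consider "i < k" | "i = k" | "k < i" by linarith
  then show ?thesis
  proof cases
    case 1
    then have ik: "i \<le> k'" using k' by simp
    have A: "wbox n p q i k = prod_ivl 1 i p * (prod_ivl (i + 1) k q * q k) * prod_ivl (k + 1) (n + 1) p"
      using 1 prod_ivl_top[of "i + 1" k q] by (simp add: wbox_prod_ivl)
    have B: "wbox n p q i (prv n k) = prod_ivl 1 i p * prod_ivl (i + 1) k q * (p k * prod_ivl (k + 1) (n + 1) p)"
      using pk' ik k' prod_ivl_bot[of k "n + 1" p] k2 by (simp add: wbox_prod_ivl)
    show ?thesis using A B 1 by (simp add: algebra_simps)
  next
    case 2
    have A: "p k * wbox n p q i k = prod_ivl 1 (n + 1) p"
    proof -
      have "p k * wbox n p q i k = (prod_ivl 1 k p * p k) * prod_ivl (k + 1) (n + 1) p"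
        using 2 by (simp add: wbox_prod_ivl prod_ivl_empty algebra_simps)
      also have "\<dots> = prod_ivl 1 (k + 1) p * prod_ivl (k + 1) (n + 1) p" using prod_ivl_top[of 1 k p] k2 by simp
      also have "\<dots> = prod_ivl 1 (n + 1) p" using prod_ivl_concat[of 1 "k + 1" "n + 1" p] k2 by simp
      finally show ?thesis .
    qed
    have B: "q k * wbox n p q i (prv n k) = prod_ivl 1 (n + 1) q"
    proof -
      have "q k * wbox n p q i (prv n k) = (prod_ivl 1 k q * q k) * prod_ivl (k + 1) (n + 1) q"
        using 2 pk' k' by (simp add: wbox_prod_ivl prod_ivl_empty algebra_simps)
      also have "\<dots> = prod_ivl 1 (k + 1) q * prod_ivl (k + 1) (n + 1) q" using prod_ivl_top[of 1 k q] k2 by simp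
      also have "\<dots> = prod_ivl 1 (n + 1) q" using prod_ivl_concat[of 1 "k + 1" "n + 1" q] k2 by simp
      finally show ?thesis .
    qed
    show ?thesis using A B 2 by simp
  next
    case 3
    have A: "wbox n p q i k = (prod_ivl 1 k q * q k) * prod_ivl (k + 1) i p * prod_ivl (i + 1) (n + 1) q"
      using 3 prod_ivl_top[of 1 k q] k2 by (simp add: wbox_prod_ivl)
    have B: "wbox n p q i (prv n k) = prod_ivl 1 k q * (p k * prod_ivl (k + 1) i p) * prod_ivl (i + 1) (n + 1) q"
      using 3 pk' k' prod_ivl_bot[of k i p] by (simp add: wbox_prod_ivl)
    show ?thesis using A B 3 by (simp add: algebra_simps)
  qed
qed

definition fugacity :: "nat \<Rightarrow> (nat \<Rightarrow> real) \<Rightarrow> (nat \<Rightarrow> real) \<Rightarrow> nat \<Rightarrow> real" where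
  "fugacity n p q k = (\<Sum>i\<in>{1..n}. wbox n p q i k)"

lemma fugacity_flux:
  assumes k: "k \<in> {1..n}"
  shows "p k * fugacity n p q k - q k * fugacity n p q (prv n k) = (\<Prod>j\<in>{1..n}. p j) - (\<Prod>j\<in>{1..n}. q j)"
proof -
  have "p k * fugacity n p q k - q k * fugacity n p q (prv n k) = (\<Sum>i\<in>{1..n}. p k * wbox n p q i k - q k * wbox n p q i (prv n k))"
    unfolding fugacity_def by (simp add: sum_distrib_left sum_subtractf)
  also have "\<dots> = (\<Sum>i\<in>{1..n}. (if i = k then prod_ivl 1 (n + 1) p - prod_ivl 1 (n + 1) q else 0))"
    using wbox_flux[OF k] by (intro sum.cong) auto
  also have "\<dots> = prod_ivl 1 (n + 1) p - prod_ivl 1 (n + 1) q" using k by simp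
  finally show ?thesis unfolding prod_ivl_atLeastAtMost by simp
qed

lemma fugacity_pos:
  assumes pq: "\<And>j. j \<in> {1..n} \<Longrightarrow> 0 < p j \<and> 0 < q j" and k: "k \<in> {1..n}"
  shows "0 < fugacity n p q k"
  unfolding fugacity_def using k by (intro sum_pos) (auto intro: wbox_pos[OF pq])

section \<open>The partition function\<close>

text \<open>A word whose balls sit at the sites \<open>c\<close> is determined by the labels of the boxes on the
  other sites, and \<open>wt\<close> is a product over these sites: so the sum of \<open>wt\<close> factorises.\<close>
locale fixed_balls =
  fixes L n :: nat and c :: "nat \<Rightarrow> nat"
  assumes ordered: "cyclic_order L n c" and n: "1 \<le> n"
begin

definition words :: "letter list set" where "words = {w \<in> Omega L n. \<forall>k\<in>{1..n}. bpos w k = c k}"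

definition holes :: "nat set" where "holes = {x. x < L \<and> x \<notin> c ` {1..n}}"

definition ball_index :: "nat \<Rightarrow> nat" where "ball_index x = (THE k. k \<in> {1..n} \<and> c k = x)"

definition fill :: "(nat \<Rightarrow> nat) \<Rightarrow> letter list" where
  "fill lab = map (\<lambda>x. if x \<in> c ` {1..n} then letter.Ball (ball_index x) else Box (lab x)) [0..<L]"

definition gap_sites :: "nat \<Rightarrow> nat set" where
  "gap_sites k = {x. x < L \<and> fwd L (c k) x < fwd L (c k) (c (nxt n k))}"

definition gap_index :: "nat \<Rightarrow> nat" where
  "gap_index x = (THE k. k \<in> {1..n} \<and> x \<in> gap_sites k)"

lemma c_less: "k \<in> {1..n} \<Longrightarrow> c k < L" using cyclic_order_lt[OF ordered] .

lemma ball_index_pos: "k \<in> {1..n} \<Longrightarrow> ball_index (c k) = k"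
  unfolding ball_index_def using cyclic_order_inj[OF ordered] by (intro the_equality) auto

lemma fill_nth: "x < L \<Longrightarrow> fill lab ! x = (if x \<in> c ` {1..n} then letter.Ball (ball_index x) else Box (lab x))"
  unfolding fill_def by simp

lemma length_fill: "length (fill lab) = L" unfolding fill_def by simp

lemma fill_in_words:
  assumes lab: "lab \<in> PiE holes (\<lambda>_. {1..n})"
  shows "fill lab \<in> words"
proof -
  have val: "in_alphabet n (fill lab ! x)" if x: "x < L" for x
  proof (cases "x \<in> c ` {1..n}")
    case True
    then obtain k where k: "k \<in> {1..n}" "x = c k" by auto
    then show ?thesis using fill_nth[OF x] ball_index_pos[OF k(1)] in_alphabet_Ball[OF k(1)] by simp
  next
    case False
    then have "x \<in> holes" using x unfolding holes_def by simp
    then have "lab x \<in> {1..n}" using lab by auto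
    then show ?thesis using fill_nth[OF x] False in_alphabet_Box by simp
  qed
  have ball: "fill lab ! x = letter.Ball m \<longleftrightarrow> m \<in> {1..n} \<and> x = c m" if x: "x < L" for x m
  proof (cases "x \<in> c ` {1..n}")
    case True
    then obtain k where k: "k \<in> {1..n}" "x = c k" by auto
    then show ?thesis using fill_nth[OF x] ball_index_pos[OF k(1)] cyclic_order_inj[OF ordered k(1)] by auto
  next
    case False
    then show ?thesis using fill_nth[OF x] by auto
  qed
  note T = Omega_intro_positions[OF length_fill val ordered ball]
  show ?thesis unfolding words_def using T by simp
qed

lemma words_box:
  assumes w: "w \<in> words" and x: "x \<in> holes"
  shows "\<exists>i\<in>{1..n}. w ! x = Box i"
proof -
  have wO: "w \<in> Omega L n" and bp: "\<And>k. k \<in> {1..n} \<Longrightarrow> bpos w k = c k" using w unfolding words_def by auto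
  have "x < L" "x \<notin> c ` {1..n}" using x unfolding holes_def by auto
  then have "\<And>m. m \<in> {1..n} \<Longrightarrow> x \<noteq> bpos w m" using bp by auto
  then show ?thesis using Omega_free_site_box[OF wO \<open>x < L\<close>] by blast
qed

lemma words_ball:
  assumes w: "w \<in> words" and k: "k \<in> {1..n}"
  shows "w ! c k = letter.Ball k"
proof -
  have wO: "w \<in> Omega L n" and bp: "bpos w k = c k" using w k unfolding words_def by auto
  show ?thesis using Omega_facts(3)[OF wO c_less[OF k]] bp k by simp
qed

lemma bij_fill: "bij_betw fill (PiE holes (\<lambda>_. {1..n})) words"
proof (rule bij_betw_imageI)
  show "inj_on fill (PiE holes (\<lambda>_. {1..n}))"
  proof (rule inj_onI)
    fix a b assume a: "a \<in> PiE holes (\<lambda>_. {1..n})" and b: "b \<in> PiE holes (\<lambda>_. {1..n})" and e: "fill a = fill b"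
    show "a = b"
    proof (rule extensionalityI[of _ holes])
      show "a \<in> extensional holes" "b \<in> extensional holes" using a b by (auto simp: PiE_def)
      fix x assume x: "x \<in> holes"
      then have xl: "x < L" "x \<notin> c ` {1..n}" unfolding holes_def by auto
      have "fill a ! x = fill b ! x" using e by simp
      then show "a x = b x" using fill_nth[OF xl(1)] xl(2) by simp
    qed
  qed
  show "fill ` PiE holes (\<lambda>_. {1..n}) = words"
  proof
    show "fill ` PiE holes (\<lambda>_. {1..n}) \<subseteq> words" using fill_in_words by blast
    show "words \<subseteq> fill ` PiE holes (\<lambda>_. {1..n})"
    proof
      fix w assume w: "w \<in> words"
      define lab where "lab = (\<lambda>x\<in>holes. box_label (w ! x))"
      have lab_in: "lab \<in> PiE holes (\<lambda>_. {1..n})"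
      proof -
        have "lab x \<in> {1..n}" if "x \<in> holes" for x
          using words_box[OF w that] that unfolding lab_def box_label_def by auto
        then show ?thesis unfolding lab_def by auto
      qed
      have wO: "w \<in> Omega L n" using w unfolding words_def by auto
      have "w = fill lab"
      proof (rule nth_equalityI)
        show "length w = length (fill lab)" using Omega_facts(1)[OF wO] length_fill by simp
        fix x assume "x < length w"
        then have x: "x < L" using Omega_facts(1)[OF wO] by simp
        show "w ! x = fill lab ! x"
        proof (cases "x \<in> c ` {1..n}")
          case True
          then obtain k where k: "k \<in> {1..n}" "x = c k" by auto
          then show ?thesis using fill_nth[OF x] ball_index_pos words_ball[OF w] by simp
        next
          case False
          then have xP: "x \<in> holes" using x unfolding holes_def by simp
          then obtain i where "w ! x = Box i" using words_box[OF w] by blast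
          then show ?thesis using fill_nth[OF x] False xP unfolding lab_def box_label_def by simp
        qed
      qed
      then show "w \<in> fill ` PiE holes (\<lambda>_. {1..n})" using lab_in by blast
    qed
  qed
qed

lemma gap_sites_subset_block: "k \<in> {1..n} \<Longrightarrow> gap_sites k \<subseteq> block L n c k"
  unfolding gap_sites_def block_def by auto

lemma gap_sites_disjoint: "k \<in> {1..n} \<Longrightarrow> l \<in> {1..n} \<Longrightarrow> k \<noteq> l \<Longrightarrow> gap_sites k \<inter> gap_sites l = {}"
  using block_disjoint[OF ordered] gap_sites_subset_block by blast

lemma gap_sites_subset_holes: "k \<in> {1..n} \<Longrightarrow> gap_sites k \<subseteq> holes"
proof
  fix x assume k: "k \<in> {1..n}" and x: "x \<in> gap_sites k"
  have xl: "x < L" "fwd L (c k) x < fwd L (c k) (c (nxt n k))" using x unfolding gap_sites_def by auto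
  have "x \<noteq> c l" if l: "l \<in> {1..n}" for l
    using cyclic_order_nearest[OF ordered k l] xl(2) by auto
  then have "x \<notin> c ` {1..n}" by blast
  then show "x \<in> holes" unfolding holes_def using xl(1) by blast
qed

lemma holes_eq_Union_gap_sites: "holes = (\<Union>k\<in>{1..n}. gap_sites k)"
proof
  show "(\<Union>k\<in>{1..n}. gap_sites k) \<subseteq> holes" using gap_sites_subset_holes by blast
  show "holes \<subseteq> (\<Union>k\<in>{1..n}. gap_sites k)"
  proof
    fix x assume x: "x \<in> holes"
    then have xl: "x < L" "x \<notin> c ` {1..n}" unfolding holes_def by auto
    obtain a where a: "a \<in> {1..n}" "x \<in> block L n c a" using block_cover[OF ordered n xl(1)] by blast
    then have "x \<in> gap_sites a" using xl unfolding block_def gap_sites_def by auto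
    then show "x \<in> (\<Union>k\<in>{1..n}. gap_sites k)" using a by blast
  qed
qed

lemma gap_index_eq: "k \<in> {1..n} \<Longrightarrow> x \<in> gap_sites k \<Longrightarrow> gap_index x = k"
proof -
  assume k: "k \<in> {1..n}" and x: "x \<in> gap_sites k"
  show "gap_index x = k" unfolding gap_index_def
  proof (rule the_equality)
    show "k \<in> {1..n} \<and> x \<in> gap_sites k" using k x by simp
    fix l assume "l \<in> {1..n} \<and> x \<in> gap_sites l"
    then show "l = k" using gap_sites_disjoint[OF k, of l] x by auto
  qed
qed

lemma gapC_words: "w \<in> words \<Longrightarrow> k \<in> {1..n} \<Longrightarrow> gapC n w k = gap_sites k"
proof -
  assume w: "w \<in> words" and k: "k \<in> {1..n}"
  have wO: "w \<in> Omega L n" and bp: "\<And>k. k \<in> {1..n} \<Longrightarrow> bpos w k = c k" using w unfolding words_def by auto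
  show "gapC n w k = gap_sites k" unfolding gapC_def gap_sites_def Omega_facts(1)[OF wO] using bp k nxt_in[OF k] by simp
qed

lemma finite_holes: "finite holes" unfolding holes_def by simp

lemma finite_gap_sites: "finite (gap_sites k)" unfolding gap_sites_def by simp

lemma card_gap_sites: "k \<in> {1..n} \<Longrightarrow> card (gap_sites k) = fwd L (c k) (c (nxt n k)) - 1"
proof -
  assume k: "k \<in> {1..n}"
  have a: "c k < L" and b: "c (nxt n k) < L" using c_less[OF k] c_less[OF nxt_in[OF k]] by auto
  show ?thesis unfolding gap_sites_def using card_fwd_less[OF a fwd_pos[OF a b] fwd_le[OF a b]] .
qed

lemma sum_wt_fixed_balls:
  "(\<Sum>w\<in>words. wt n p q w) = (\<Prod>k\<in>{1..n}. fugacity n p q k ^ (fwd L (c k) (c (nxt n k)) - 1))"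
proof -
  have "(\<Sum>w\<in>words. wt n p q w) = (\<Sum>lab\<in>PiE holes (\<lambda>_. {1..n}). wt n p q (fill lab))"
    using sum.reindex_bij_betw[OF bij_fill, of "wt n p q"] by simp
  also have "\<dots> = (\<Sum>lab\<in>PiE holes (\<lambda>_. {1..n}). \<Prod>j\<in>holes. wbox n p q (lab j) (gap_index j))"
  proof (rule sum.cong[OF refl])
    fix lab assume lab: "lab \<in> PiE holes (\<lambda>_. {1..n})"
    have mB: "fill lab \<in> words" using fill_in_words[OF lab] .
    have "wt n p q (fill lab) = (\<Prod>k\<in>{1..n}. \<Prod>j\<in>gap_sites k. wbox n p q (lab j) k)"
      unfolding wt_def
    proof (rule prod.cong[OF refl])
      fix k assume k: "k \<in> {1..n}"
      show "(\<Prod>j\<in>gapC n (fill lab) k. wbox n p q (box_label (fill lab ! j)) k) = (\<Prod>j\<in>gap_sites k. wbox n p q (lab j) k)"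
        unfolding gapC_words[OF mB k]
      proof (rule prod.cong[OF refl])
        fix j assume j: "j \<in> gap_sites k"
        then have "j \<in> holes" using gap_sites_subset_holes[OF k] by blast
        then have "j < L" "j \<notin> c ` {1..n}" unfolding holes_def by auto
        then show "wbox n p q (box_label (fill lab ! j)) k = wbox n p q (lab j) k"
          using fill_nth by (simp add: box_label_def)
      qed
    qed
    also have "\<dots> = (\<Prod>k\<in>{1..n}. \<Prod>j\<in>gap_sites k. wbox n p q (lab j) (gap_index j))"
      using gap_index_eq by (intro prod.cong) auto
    also have "\<dots> = (\<Prod>j\<in>holes. wbox n p q (lab j) (gap_index j))"
      unfolding holes_eq_Union_gap_sites by (rule prod.UNION_disjoint[symmetric]) (simp, simp add: finite_gap_sites, use gap_sites_disjoint in blast)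
    finally show "wt n p q (fill lab) = (\<Prod>j\<in>holes. wbox n p q (lab j) (gap_index j))" .
  qed
  also have "\<dots> = (\<Prod>j\<in>holes. \<Sum>i\<in>{1..n}. wbox n p q i (gap_index j))"
    by (rule prod_sum_PiE[symmetric]) (auto simp: finite_holes)
  also have "\<dots> = (\<Prod>j\<in>holes. fugacity n p q (gap_index j))" unfolding fugacity_def by simp
  also have "\<dots> = (\<Prod>k\<in>{1..n}. \<Prod>j\<in>gap_sites k. fugacity n p q (gap_index j))"
    unfolding holes_eq_Union_gap_sites by (rule prod.UNION_disjoint) (simp, simp add: finite_gap_sites, use gap_sites_disjoint in blast)
  also have "\<dots> = (\<Prod>k\<in>{1..n}. \<Prod>j\<in>gap_sites k. fugacity n p q k)"
    using gap_index_eq by (intro prod.cong) auto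
  also have "\<dots> = (\<Prod>k\<in>{1..n}. fugacity n p q k ^ (fwd L (c k) (c (nxt n k)) - 1))"
    using card_gap_sites by (intro prod.cong) auto
  finally show ?thesis .
qed

end

text \<open>The site of ball \<open>k\<close> in the word with ball \<open>1\<close> at site \<open>0\<close> and gap vector \<open>g\<close>.\<close>
definition canon_pos :: "(nat \<Rightarrow> nat) \<Rightarrow> nat \<Rightarrow> nat" where
  "canon_pos g k = (\<Sum>l\<in>{1..<k}. g l + 1)"

lemma canon_pos_1: "canon_pos g 1 = 0" unfolding canon_pos_def by simp

lemma canon_pos_Suc: "1 \<le> k \<Longrightarrow> canon_pos g (k + 1) = canon_pos g k + g k + 1"
  unfolding canon_pos_def by (simp add: sum.atLeastLessThan_Suc)

lemma canon_pos_mono: "1 \<le> k \<Longrightarrow> k < l \<Longrightarrow> canon_pos g k + (l - k) \<le> canon_pos g l"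
proof (induction l)
  case 0 then show ?case by simp
next
  case (Suc l)
  show ?case
  proof (cases "k < l")
    case True
    then have "canon_pos g k + (l - k) \<le> canon_pos g l" using Suc by simp
    moreover have "canon_pos g (Suc l) = canon_pos g l + g l + 1" using canon_pos_Suc[of l g] Suc.prems True by simp
    ultimately show ?thesis using True by simp
  next
    case False
    then have "l = k" using Suc.prems by simp
    then show ?thesis using canon_pos_Suc[of k g] Suc.prems by simp
  qed
qed

lemma canon_pos_total:
  assumes g: "g \<in> compositions n m" and n: "1 \<le> n"
  shows "canon_pos g n + g n + 1 = m + n"
proof -
  have "canon_pos g n + g n + 1 = canon_pos g (n + 1)" using canon_pos_Suc[OF n] by simp
  also have "\<dots> = (\<Sum>l\<in>{1..n}. g l + 1)" unfolding canon_pos_def by (simp add: atLeastLessThanSuc_atLeastAtMost)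
  also have "\<dots> = sum g {1..n} + sum (\<lambda>_. 1) {1..n}" by (rule sum.distrib)
  also have "\<dots> = m + n" using g unfolding compositions_iff by simp
  finally show ?thesis .
qed

lemma canon_pos_less:
  assumes g: "g \<in> compositions n m" and n: "1 \<le> n" and k: "k \<in> {1..n}"
  shows "canon_pos g k < m + n"
proof (cases "k = n")
  case True then show ?thesis using canon_pos_total[OF g n] by simp
next
  case False
  then have kn: "k < n" using k by simp
  then have "canon_pos g k + (n - k) \<le> canon_pos g n" using canon_pos_mono[of k n g] k by simp
  moreover have "0 < n - k" using kn by simp
  ultimately have "canon_pos g k < canon_pos g n" by linarith
  then show ?thesis using canon_pos_total[OF g n] by simp
qed

lemma canon_pos_fwd:
  assumes g: "g \<in> compositions n m" and n: "1 \<le> n" and k: "k \<in> {1..n}"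
  shows "fwd (m + n) (canon_pos g k) (canon_pos g (nxt n k)) = g k + 1"
proof (cases "k = n")
  case True
  then have nk: "nxt n k = 1" unfolding nxt_def by simp
  have sl: "canon_pos g n < m + n" using canon_pos_less[OF g n] n by simp
  have "0 < m + n" using n by simp
  then have "fwd (m + n) (canon_pos g n) 0 = 0 + (m + n) - canon_pos g n" using fwd_eq[of "canon_pos g n" "m + n" 0] sl by simp
  then show ?thesis using True nk canon_pos_1 canon_pos_total[OF g n] by simp
next
  case False
  then have nk: "nxt n k = k + 1" unfolding nxt_def by simp
  have k1: "k + 1 \<in> {1..n}" using k False by auto
  have lt: "canon_pos g k < canon_pos g (k + 1)" using canon_pos_Suc[of k g] k by simp
  show ?thesis using nk canon_pos_Suc[of k g] k lt canon_pos_less[OF g n k] canon_pos_less[OF g n k1] by (simp add: fwd_eq)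
qed

lemma canon_pos_cyclic_order:
  assumes g: "g \<in> compositions n m" and n: "1 \<le> n"
  shows "cyclic_order (m + n) n (canon_pos g)"
  unfolding cyclic_order_def
proof (intro conjI ballI)
  fix k assume "k \<in> {1..n}" then show "canon_pos g k < m + n" using canon_pos_less[OF g n] by simp
next
  show "inj_on (canon_pos g) {1..n}"
  proof (rule inj_onI)
    fix a b assume a: "a \<in> {1..n}" and b: "b \<in> {1..n}" and e: "canon_pos g a = canon_pos g b"
    show "a = b"
    proof (rule ccontr)
      assume "a \<noteq> b"
      then consider "a < b" | "b < a" by linarith
      then show False
      proof cases
        case 1 then show False using canon_pos_mono[of a b g] a e by simp
      next
        case 2 then show False using canon_pos_mono[of b a g] b e by simp
      qed
    qed
  qed
next
  fix a l assume a: "a \<in> {1..n}" and l: "l \<in> {1..n}"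
  have aL: "canon_pos g a < m + n" and lL: "canon_pos g l < m + n" using canon_pos_less[OF g n] a l by auto
  have d: "fwd (m + n) (canon_pos g a) (canon_pos g (nxt n a)) = g a + 1" using canon_pos_fwd[OF g n a] .
  show "fwd (m + n) (canon_pos g a) (canon_pos g (nxt n a)) \<le> fwd (m + n) (canon_pos g a) (canon_pos g l)"
  proof (cases "a = n")
    case True
    have tot: "canon_pos g a + g a + 1 = m + n" using canon_pos_total[OF g n] True by simp
    show ?thesis
    proof (cases "l = a")
      case True then show ?thesis using d fwd_self[OF aL] tot by simp
    next
      case False
      then have "l < a" using l True by simp
      then have "canon_pos g l < canon_pos g a" using canon_pos_mono[of l a g] l by simp
      then show ?thesis using d tot aL lL by (simp add: fwd_eq)
    qed
  next
    case False
    then have a1: "a + 1 \<in> {1..n}" using a by auto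
    have s1: "canon_pos g (a + 1) = canon_pos g a + g a + 1" using canon_pos_Suc[of a g] a by simp
    have a1L: "canon_pos g (a + 1) < m + n" using canon_pos_less[OF g n a1] .
    consider "l = a" | "a < l" | "l < a" by linarith
    then show ?thesis
    proof cases
      case 1 then show ?thesis using d fwd_le[OF aL] fwd_self[OF aL] a1L s1 by simp
    next
      case 2
      then have "a + 1 = l \<or> a + 1 < l" by auto
      then have "canon_pos g (a + 1) \<le> canon_pos g l" using canon_pos_mono[of "a + 1" l g] by auto
      then show ?thesis using d s1 aL lL by (simp add: fwd_eq)
    next
      case 3
      then have "canon_pos g l < canon_pos g a" using canon_pos_mono[of l a g] l by simp
      then show ?thesis using d s1 aL lL a1L by (simp add: fwd_eq)
    qed
  qed
qed

lemma canonical_fiber_eq: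
  assumes gG: "g \<in> compositions n m" and n: "1 \<le> n"
  shows "{w \<in> Omega (m + n) n. w ! 0 = letter.Ball 1 \<and> gaps n w = g} = fixed_balls.words (m + n) n (canon_pos g)"
proof -
  interpret fixed_balls "m + n" n "canon_pos g" using canon_pos_cyclic_order[OF gG n] n by unfold_locales
  have gext: "g \<in> extensional {1..n}" using gG compositions_iff by blast
  show ?thesis
  proof
    show "{w \<in> Omega (m + n) n. w ! 0 = letter.Ball 1 \<and> gaps n w = g} \<subseteq> words"
    proof
      fix w assume "w \<in> {w \<in> Omega (m + n) n. w ! 0 = letter.Ball 1 \<and> gaps n w = g}"
      then have w: "w \<in> Omega (m + n) n" and w0: "w ! 0 = letter.Ball 1" and gw: "gaps n w = g" by auto
      note F = Omega_facts[OF w]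
      have b1: "bpos w 1 = 0" using F(3)[of 0 1] w0 n by simp
      have d: "fwd (m + n) (bpos w a) (bpos w (nxt n a)) = g a + 1" if a: "a \<in> {1..n}" for a
      proof -
        have "gaps n w a = fwd (m + n) (bpos w a) (bpos w (nxt n a)) - 1" using gaps_eq[OF w a] .
        moreover have "1 \<le> fwd (m + n) (bpos w a) (bpos w (nxt n a))"
          using fwd_pos cyclic_order_lt[OF F(2) a] cyclic_order_lt[OF F(2) nxt_in[OF a]] by blast
        ultimately show ?thesis using gw by simp
      qed
      have "k \<in> {1..n} \<longrightarrow> bpos w k = canon_pos g k" for k
      proof (induction k)
        case 0 then show ?case by simp
      next
        case (Suc k)
        show ?case
        proof
          assume k1: "Suc k \<in> {1..n}"
          show "bpos w (Suc k) = canon_pos g (Suc k)"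
          proof (cases "k = 0")
            case True then show ?thesis using b1 canon_pos_1 by simp
          next
            case False
            then have k: "k \<in> {1..n}" using k1 by auto
            have nk: "nxt n k = Suc k" using k1 unfolding nxt_def by auto
            have IH: "bpos w k = canon_pos g k" using Suc k by simp
            have "bpos w (Suc k) = (bpos w k + fwd (m + n) (bpos w k) (bpos w (nxt n k))) mod (m + n)"
              using fwd_recover[OF cyclic_order_lt[OF F(2) k] cyclic_order_lt[OF F(2) nxt_in[OF k]]] nk by simp
            also have "\<dots> = (canon_pos g k + g k + 1) mod (m + n)" using IH d[OF k] by simp
            also have "\<dots> = canon_pos g (Suc k)" using canon_pos_Suc[of k g] k canon_pos_less[OF gG n k1] by simp
            finally show ?thesis .
          qed
        qed
      qed
      then show "w \<in> words" unfolding words_def using w by auto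
    qed
    show "words \<subseteq> {w \<in> Omega (m + n) n. w ! 0 = letter.Ball 1 \<and> gaps n w = g}"
    proof
      fix w assume wB: "w \<in> words"
      then have w: "w \<in> Omega (m + n) n" and bp: "\<And>k. k \<in> {1..n} \<Longrightarrow> bpos w k = canon_pos g k"
        unfolding words_def by auto
      have one: "1 \<in> {1..n}" using n by simp
      have w0: "w ! 0 = letter.Ball 1" using words_ball[OF wB one] canon_pos_1 by simp
      have "gaps n w = g"
      proof (rule extensionalityI[OF gaps_extensional gext])
        fix a assume a: "a \<in> {1..n}"
        show "gaps n w a = g a" using gaps_eq[OF w a] bp[OF a] bp[OF nxt_in[OF a]] canon_pos_fwd[OF gG n a] by simp
      qed
      then show "w \<in> {w \<in> Omega (m + n) n. w ! 0 = letter.Ball 1 \<and> gaps n w = g}" using w w0 by simp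
    qed
  qed
qed

lemma Z_eq_sum_prod_weight:
  assumes n: "1 \<le> n" and L: "n \<le> L'"
  shows "Z L' n p q = (\<Sum>g\<in>compositions n (L' - n). prod_weight n (fugacity n p q) g)"
proof -
  define m where "m = L' - n"
  have Lm: "L' = m + n" using L m_def by simp
  define A where "A = {w \<in> Omega L' n. w ! 0 = letter.Ball 1}"
  have fA: "finite A" unfolding A_def using finite_Omega by simp
  have sub: "gaps n ` A \<subseteq> compositions n m" unfolding A_def m_def using gaps_in_compositions[OF _ n] by auto
  have "Z L' n p q = (\<Sum>w\<in>A. wt n p q w)" unfolding Z_def A_def by simp
  also have "\<dots> = (\<Sum>g\<in>compositions n m. \<Sum>w\<in>{x \<in> A. gaps n x = g}. wt n p q w)"
    by (rule sum.group[OF fA finite_compositions sub, symmetric])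
  also have "\<dots> = (\<Sum>g\<in>compositions n m. prod_weight n (fugacity n p q) g)"
  proof (rule sum.cong[OF refl])
    fix g assume gG: "g \<in> compositions n m"
    interpret fixed_balls "m + n" n "canon_pos g" using canon_pos_cyclic_order[OF gG n] n by unfold_locales
    have "{x \<in> A. gaps n x = g} = words" using canonical_fiber_eq[OF gG n] unfolding A_def Lm by auto
    then have "(\<Sum>w\<in>{x \<in> A. gaps n x = g}. wt n p q w) = (\<Prod>k\<in>{1..n}. fugacity n p q k ^ (fwd (m + n) (canon_pos g k) (canon_pos g (nxt n k)) - 1))"
      using sum_wt_fixed_balls by simp
    also have "\<dots> = prod_weight n (fugacity n p q) g" unfolding prod_weight_def using canon_pos_fwd[OF gG n] by (intro prod.cong) auto
    finally show "(\<Sum>w\<in>{x \<in> A. gaps n x = g}. wt n p q w) = prod_weight n (fugacity n p q) g" .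
  qed
  finally show ?thesis unfolding m_def .
qed

lemma gap_law_eq_prod_weight:
  assumes n: "1 \<le> n" and nL: "n \<le> L" and pq: "\<And>k. k \<in> {1..n} \<Longrightarrow> 0 < p k \<and> 0 < q k"
    and st: "stationary L n p q \<pi>" and g: "g \<in> compositions n (L - n)"
  shows "gap_law L n \<pi> g = prod_weight n (fugacity n p q) g / Z L n p q"
proof -
  define S where "S = compositions n (L - n)"
  define x where "x = fugacity n p q"
  have x_pos: "0 < x j" if "j \<in> {1..n}" for j
    unfolding x_def by (rule fugacity_pos[where p = p and q = q, OF pq that])
  have "\<exists>C. \<forall>g\<in>S. gap_law L n \<pi> g = C * prod_weight n x g"
  proof (rule stationary_proportional[where R = "zrp_rate n p q" and out = "zrp_out_rate n p q"])
    show "finite S" unfolding S_def by (rule finite_compositions)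
    show "0 \<le> zrp_rate n p q g h" for g h using zrp_rate_nonneg[where p = p and q = q, OF pq] .
    show "(g, h) \<in> {(g, h). g \<in> S \<and> h \<in> S \<and> 0 < zrp_rate n p q g h}\<^sup>*" if "g \<in> S" "h \<in> S" for g h
      using zrp_connected[where p = p and q = q, OF pq] that unfolding zrp_edges_def S_def by blast
    show "0 < prod_weight n x g" for g using prod_weight_pos[OF x_pos] .
    show "(\<Sum>g\<in>S. prod_weight n x g * zrp_rate n p q g h) = prod_weight n x h * zrp_out_rate n p q h"
      if "h \<in> S" for h
      using prod_weight_stationary[where n = n and x = x and p = p and q = q, OF x_pos fugacity_flux[where n = n and p = p and q = q, folded x_def]] that
      unfolding S_def by blast
    show "(\<Sum>g\<in>S. gap_law L n \<pi> g * zrp_rate n p q g h) = gap_law L n \<pi> h * zrp_out_rate n p q h"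
      for h unfolding S_def by (rule gap_law_stationary[OF st n])
  qed
  then obtain C where C: "\<And>g. g \<in> S \<Longrightarrow> gap_law L n \<pi> g = C * prod_weight n x g" by blast
  have "1 = (\<Sum>g\<in>S. gap_law L n \<pi> g)" using sum_gap_law[OF st n] S_def by simp
  also have "\<dots> = C * Z L n p q"
    using C Z_eq_sum_prod_weight[OF n nL] unfolding S_def x_def by (simp add: sum_distrib_left)
  finally have "C * Z L n p q = 1" by simp
  then have "C = 1 / Z L n p q" by (auto simp: eq_divide_eq)
  then show ?thesis using C g x_def S_def by simp
qed

section \<open>The current\<close>

lemma sum_eta:
  assumes w: "w \<in> Omega L n" and x: "x < L"
  shows "(\<Sum>k=1..n. eta k x w) = (if \<exists>m\<in>{1..n}. x = bpos w m then 0 else 1)"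
proof (cases "\<exists>m\<in>{1..n}. x = bpos w m")
  case True
  then obtain m where m: "m \<in> {1..n}" "x = bpos w m" by blast
  then have "w ! x = letter.Ball m" using Omega_facts(3)[OF w x] by simp
  then show ?thesis using True unfolding eta_def by simp
next
  case False
  then obtain i where i: "i \<in> {1..n}" "w ! x = Box i" using Omega_free_site_box[OF w x] by blast
  have "(\<Sum>k=1..n. eta k x w) = (\<Sum>k=1..n. if k = i then 1 else 0)"
    unfolding eta_def using i by (intro sum.cong) auto
  also have "\<dots> = 1" using i by simp
  finally show ?thesis using False by simp
qed

lemma site_after_ball_free:
  assumes w: "w \<in> Omega L n" and k: "k \<in> {1..n}"
  shows "(if \<exists>m\<in>{1..n}. (bpos w k + 1) mod L = bpos w m then 0 else 1) = (if 0 < gaps n w k then 1 else (0::real))"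
proof -
  note F = Omega_facts[OF w]
  have bL: "bpos w k < L" using cyclic_order_lt[OF F(2) k] .
  have nL: "bpos w (nxt n k) < L" using cyclic_order_lt[OF F(2) nxt_in[OF k]] .
  have pos: "1 \<le> fwd L (bpos w k) (bpos w (nxt n k))" using fwd_pos[OF bL nL] .
  have g: "gaps n w k = fwd L (bpos w k) (bpos w (nxt n k)) - 1" using gaps_eq[OF w k] .
  show ?thesis
  proof (cases "gaps n w k = 0")
    case True
    then have "fwd L (bpos w k) (bpos w (nxt n k)) = 1" using g pos by simp
    then have "(bpos w k + 1) mod L = bpos w (nxt n k)" using succ_is_next_ball[OF w k] by simp
    then show ?thesis using True nxt_in[OF k] by auto
  next
    case False
    then have d: "2 \<le> fwd L (bpos w k) (bpos w (nxt n k))" using g by simp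
    have "\<And>m. m \<in> {1..n} \<Longrightarrow> (bpos w k + 1) mod L \<noteq> bpos w m"
      using succ_site_free[OF F(2) k d] by metis
    then show ?thesis using False by auto
  qed
qed

lemma site_before_ball_free:
  assumes w: "w \<in> Omega L n" and k: "k \<in> {1..n}"
  shows "(if \<exists>m\<in>{1..n}. (bpos w k + L - 1) mod L = bpos w m then 0 else 1) = (if 0 < gaps n w (prv n k) then 1 else (0::real))"
proof -
  note F = Omega_facts[OF w]
  have pk: "prv n k \<in> {1..n}" using prv_in[OF k] .
  have bL: "bpos w k < L" using cyclic_order_lt[OF F(2) k] .
  have pL: "bpos w (prv n k) < L" using cyclic_order_lt[OF F(2) pk] .
  have pos: "1 \<le> fwd L (bpos w (prv n k)) (bpos w k)" using fwd_pos[OF pL bL] .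
  have g: "gaps n w (prv n k) = fwd L (bpos w (prv n k)) (bpos w k) - 1"
    using gaps_eq[OF w pk] nxt_prv[OF k] by simp
  show ?thesis
  proof (cases "gaps n w (prv n k) = 0")
    case True
    then have "fwd L (bpos w (prv n k)) (bpos w k) = 1" using g pos by simp
    then have "(bpos w k + L - 1) mod L = bpos w (prv n k)" using pred_is_prev_ball[OF w k] by simp
    then show ?thesis using True pk by auto
  next
    case False
    then have d: "2 \<le> fwd L (bpos w (prv n k)) (bpos w k)" using g by simp
    have "\<And>m. m \<in> {1..n} \<Longrightarrow> (bpos w k + L - 1) mod L \<noteq> bpos w m"
      using pred_site_free[OF F(2) k d] by metis
    then show ?thesis using False by auto
  qed
qed

lemma sum_tau_right:
  assumes w: "w \<in> Omega L n" and i: "i \<in> {1..n}"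
  shows "(\<Sum>j<L. tau i j w * (\<Sum>k=1..n. eta k ((j + 1) mod L) w)) = (if 0 < gaps n w i then 1 else 0)"
proof -
  note F = Omega_facts[OF w]
  have bL: "bpos w i < L" using cyclic_order_lt[OF F(2) i] .
  have "(\<Sum>j<L. tau i j w * (\<Sum>k=1..n. eta k ((j + 1) mod L) w))
      = (\<Sum>j<L. if j = bpos w i then (\<Sum>k=1..n. eta k ((bpos w i + 1) mod L) w) else 0)"
  proof (rule sum.cong[OF refl])
    fix j assume "j \<in> {..<L}"
    then have j: "j < L" by simp
    have "w ! j = letter.Ball i \<longleftrightarrow> j = bpos w i" using F(3)[OF j] i by auto
    then show "tau i j w * (\<Sum>k=1..n. eta k ((j + 1) mod L) w) =
        (if j = bpos w i then (\<Sum>k=1..n. eta k ((bpos w i + 1) mod L) w) else 0)"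
      unfolding tau_def by auto
  qed
  also have "\<dots> = (\<Sum>k=1..n. eta k ((bpos w i + 1) mod L) w)" using bL by simp
  also have "\<dots> = (if 0 < gaps n w i then 1 else 0)"
    using sum_eta[OF w, of "(bpos w i + 1) mod L"] site_after_ball_free[OF w i] bL by simp
  finally show ?thesis .
qed

lemma sum_tau_left:
  assumes w: "w \<in> Omega L n" and i: "i \<in> {1..n}"
  shows "(\<Sum>j<L. tau i ((j + 1) mod L) w * (\<Sum>k=1..n. eta k j w)) = (if 0 < gaps n w (prv n i) then 1 else 0)"
proof -
  note F = Omega_facts[OF w]
  have bL: "bpos w i < L" using cyclic_order_lt[OF F(2) i] .
  define t where "t = (bpos w i + L - 1) mod L"
  have tL: "t < L" using bL t_def by simp
  have "(\<Sum>j<L. tau i ((j + 1) mod L) w * (\<Sum>k=1..n. eta k j w))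
      = (\<Sum>j<L. if j = t then (\<Sum>k=1..n. eta k t w) else 0)"
  proof (rule sum.cong[OF refl])
    fix j assume "j \<in> {..<L}"
    then have j: "j < L" by simp
    have sj: "(j + 1) mod L < L" using j by simp
    have "w ! ((j + 1) mod L) = letter.Ball i \<longleftrightarrow> (j + 1) mod L = bpos w i" using F(3)[OF sj] i by auto
    also have "\<dots> \<longleftrightarrow> j = t" using pred_mod_eq_iff[OF bL j] t_def by auto
    finally show "tau i ((j + 1) mod L) w * (\<Sum>k=1..n. eta k j w) =
        (if j = t then (\<Sum>k=1..n. eta k t w) else 0)"
      unfolding tau_def by auto
  qed
  also have "\<dots> = (\<Sum>k=1..n. eta k t w)" using tL by simp
  also have "\<dots> = (if 0 < gaps n w (prv n i) then 1 else 0)"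
    using sum_eta[OF w tL] site_before_ball_free[OF w i] t_def by simp
  finally show ?thesis .
qed

lemma Jball_eq_sum_gaps:
  assumes n: "1 \<le> n" and i: "i \<in> {1..n}"
  shows "Jball L n p q \<pi> i = (\<Sum>w\<in>Omega L n. \<pi> w *
      (p i * (if 0 < gaps n w i then 1 else 0) - q i * (if 0 < gaps n w (prv n i) then 1 else 0)))"
proof -
  have "Jball L n p q \<pi> i = (\<Sum>j<L. p i * (\<Sum>w\<in>Omega L n. \<pi> w * (tau i j w * (\<Sum>k = 1..n. eta k ((j + 1) mod L) w)))
      - q i * (\<Sum>w\<in>Omega L n. \<pi> w * (tau i ((j + 1) mod L) w * (\<Sum>k = 1..n. eta k j w))))"
    unfolding Jball_def Jball_ij_def expect_def by simp
  also have "\<dots> = p i * (\<Sum>w\<in>Omega L n. \<pi> w * (\<Sum>j<L. tau i j w * (\<Sum>k = 1..n. eta k ((j + 1) mod L) w)))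
      - q i * (\<Sum>w\<in>Omega L n. \<pi> w * (\<Sum>j<L. tau i ((j + 1) mod L) w * (\<Sum>k = 1..n. eta k j w)))"
    by (simp add: sum_subtractf sum_distrib_left sum.swap[of _ "{..<L}"])
  also have "\<dots> = p i * (\<Sum>w\<in>Omega L n. \<pi> w * (if 0 < gaps n w i then 1 else 0))
      - q i * (\<Sum>w\<in>Omega L n. \<pi> w * (if 0 < gaps n w (prv n i) then 1 else 0))"
    using sum_tau_right[OF _ i] sum_tau_left[OF _ i] by simp
  also have "\<dots> = (\<Sum>w\<in>Omega L n. \<pi> w *
      (p i * (if 0 < gaps n w i then 1 else 0) - q i * (if 0 < gaps n w (prv n i) then 1 else 0)))"
    by (simp add: sum_subtractf sum_distrib_left algebra_simps)
  finally show ?thesis .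
qed

lemma sum_prod_weight_occupied:
  assumes a: "a \<in> {1..n}" and m: "1 \<le> m"
  shows "(\<Sum>g\<in>compositions n m. prod_weight n x g * (if 0 < g a then 1 else 0)) = x a * (\<Sum>g\<in>compositions n (m - 1). prod_weight n x g)"
proof -
  define add1 where "add1 h = (\<lambda>j\<in>{1..n}. h j + (if j = a then 1 else 0))" for h :: "nat \<Rightarrow> nat"
  define sub1 where "sub1 g = (\<lambda>j\<in>{1..n}. g j - (if j = a then 1 else 0))" for g :: "nat \<Rightarrow> nat"
  have weight_add1: "prod_weight n x (add1 h) = x a * prod_weight n x h" for h
  proof -
    have "prod_weight n x (add1 h) = (\<Prod>j\<in>{1..n}. x j ^ h j * (if j = a then x a else 1))"
      unfolding prod_weight_def add1_def by (intro prod.cong) auto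
    also have "\<dots> = prod_weight n x h * x a" unfolding prod_weight_def prod.distrib using a by (simp add: prod.delta)
    finally show ?thesis by simp
  qed
  have "(\<Sum>g\<in>compositions n m. prod_weight n x g * (if 0 < g a then 1 else 0)) = (\<Sum>g\<in>{g \<in> compositions n m. 0 < g a}. prod_weight n x g)"
  proof -
    have "(\<Sum>g\<in>compositions n m. prod_weight n x g * (if 0 < g a then 1 else 0)) = (\<Sum>g\<in>compositions n m. if 0 < g a then prod_weight n x g else 0)"
      by (intro sum.cong) auto
    also have "\<dots> = (\<Sum>g\<in>{g \<in> compositions n m. 0 < g a}. prod_weight n x g)"
      using finite_compositions by (simp add: sum.inter_filter)
    finally show ?thesis .
  qed
  also have "\<dots> = (\<Sum>h\<in>compositions n (m - 1). prod_weight n x (add1 h))"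
  proof (rule sum.reindex_bij_witness[where i = add1 and j = sub1])
    fix g assume g: "g \<in> {g \<in> compositions n m. 0 < g a}"
    then have ge: "g \<in> extensional {1..n}" and gs: "sum g {1..n} = m" and ga: "0 < g a" using compositions_iff by auto
    show "add1 (sub1 g) = g"
      using ga by (intro extensionalityI[OF _ ge]) (auto simp: add1_def sub1_def)
    then show "prod_weight n x (add1 (sub1 g)) = prod_weight n x g" by simp
    have "sum (sub1 g) {1..n} + 1 = m"
    proof -
      have "sum (sub1 g) {1..n} + sum (\<lambda>j. if j = a then 1 else 0) {1..n} = sum (\<lambda>j. sub1 g j + (if j = a then 1 else 0)) {1..n}"
        by (simp add: sum.distrib)
      also have "\<dots> = sum g {1..n}" using ga by (intro sum.cong) (auto simp: sub1_def)
      finally show ?thesis using gs a by simp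
    qed
    then show "sub1 g \<in> compositions n (m - 1)" unfolding compositions_iff sub1_def by simp
  next
    fix h assume h: "h \<in> compositions n (m - 1)"
    then have he: "h \<in> extensional {1..n}" and hs: "sum h {1..n} = m - 1" using compositions_iff by auto
    show "sub1 (add1 h) = h"
      by (intro extensionalityI[OF _ he]) (auto simp: add1_def sub1_def)
    have "sum (add1 h) {1..n} = sum h {1..n} + sum (\<lambda>j. if j = a then 1 else 0) {1..n}"
      unfolding add1_def by (simp add: sum.distrib)
    then have "sum (add1 h) {1..n} = m" using hs a m by simp
    moreover have "0 < add1 h a" using a unfolding add1_def by simp
    ultimately show "add1 h \<in> {g \<in> compositions n m. 0 < g a}" unfolding compositions_iff add1_def by simp
  qed
  also have "\<dots> = x a * (\<Sum>g\<in>compositions n (m - 1). prod_weight n x g)" using weight_add1 by (simp add: sum_distrib_left)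
  finally show ?thesis .
qed

lemma sum_prod_weight_current:
  assumes i: "i \<in> {1..n}" and m: "1 \<le> m"
  shows "(\<Sum>g\<in>compositions n m. prod_weight n x g *
            (p i * (if 0 < g i then 1 else 0) - q i * (if 0 < g (prv n i) then 1 else 0)))
       = (p i * x i - q i * x (prv n i)) * (\<Sum>g\<in>compositions n (m - 1). prod_weight n x g)"
proof -
  let ?Y = "\<Sum>g\<in>compositions n (m - 1). prod_weight n x g"
  have "(\<Sum>g\<in>compositions n m. prod_weight n x g *
            (p i * (if 0 < g i then 1 else 0) - q i * (if 0 < g (prv n i) then 1 else 0)))
      = p i * (\<Sum>g\<in>compositions n m. prod_weight n x g * (if 0 < g i then 1 else 0))
        - q i * (\<Sum>g\<in>compositions n m. prod_weight n x g * (if 0 < g (prv n i) then 1 else 0))"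
    by (simp add: sum_subtractf sum_distrib_left algebra_simps)
  also have "\<dots> = p i * (x i * ?Y) - q i * (x (prv n i) * ?Y)"
    using sum_prod_weight_occupied[OF i m, of x] sum_prod_weight_occupied[OF prv_in[OF i] m, of x]
    by simp
  finally show ?thesis by (simp add: algebra_simps)
qed

theorem corollary6p10:
  fixes L n i :: nat and p q :: "nat \<Rightarrow> real" and \<pi> :: "letter list \<Rightarrow> real"
  assumes "1 \<le> n" and "n < L"
    and "\<forall>k\<in>{1..n}. 0 < p k \<and> 0 < q k"
    and "stationary L n p q \<pi>"
    and "i \<in> {1..n}"
  shows "Jball L n p q \<pi> i
         = ((\<Prod>k\<in>{1..n}. p k) - (\<Prod>k\<in>{1..n}. q k)) * Z (L - 1) n p q / Z L n p q"
proof -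
  note n = assms(1) and nL = assms(2) and st = assms(4) and i = assms(5)
  have pq: "\<And>k. k \<in> {1..n} \<Longrightarrow> 0 < p k \<and> 0 < q k" using assms(3) by blast
  define x where "x = fugacity n p q"
  define current where
    "current g = p i * (if 0 < g i then 1 else 0) - q i * (if 0 < g (prv n i) then 1 else 0)"
    for g :: "nat \<Rightarrow> nat"
  have "Jball L n p q \<pi> i = (\<Sum>g\<in>compositions n (L - n). gap_law L n \<pi> g * current g)"
    unfolding Jball_eq_sum_gaps[OF n i] current_def by (rule sum_by_gaps[OF n])
  also have "\<dots> = (\<Sum>g\<in>compositions n (L - n). prod_weight n x g * current g) / Z L n p q"
    using gap_law_eq_prod_weight[OF n _ pq st] nL unfolding x_def
    by (simp add: sum_divide_distrib)
  also have "\<dots> = (p i * x i - q i * x (prv n i)) * Z (L - 1) n p q / Z L n p q"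
    using sum_prod_weight_current[OF i, of "L - n" x p q] Z_eq_sum_prod_weight[OF n, of "L - 1" p q] nL
    unfolding current_def x_def by (simp add: diff_commute)
  finally show ?thesis using fugacity_flux[OF i] unfolding x_def by simp
qed

end
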